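(* Let $N$ be a simply connected $2$-step nilpotent Lie group with Lie algebra $\mathfrak n$ and a left-invariant Lorentzian metric $\langle\cdot,\cdot\rangle$ of $pH$-type whose center $\mathfrak Z$ is positive definite, of dimension $m$, and let $\mathfrak E=\mathfrak Z^{\perp}$, of dimension $n$. Then $(N,\langle\cdot,\cdot\rangle)$ is a nilsoliton if and only if $m=1$ and $n=2$ (so that $N$ is the three-dimensional Heisenberg group).
   Context: For $y\in\mathfrak n$ let $J_y$ be defined by $\langle J_y x,w\rangle=\langle y,[x,w]\rangle$ for all $x,w$. Here $\mathfrak n=\mathfrak Z\oplus\mathfrak E$ orthogonally; choose orthonormal bases $\{z_\alpha\}$ of $\mathfrak Z$, $\{e_a\}$ of $\mathfrak E$, $\varepsilon_\alpha=\langle z_\alpha,z_\alpha\rangle$, $\bar\varepsilon_a=\langle e_a,e_a\rangle$. The involution $\iota$ is given by $\iota z_\alpha=\varepsilon_\alpha z_\alpha$, $\iota e_a=\bar\varepsilon_a e_a$, and $j(y)=\iota\circ J_{\iota y}$. The metric is of $pH$-type if $j(z)^2=-\langle z,\iota z\rangle I$ (on $\mathfrak E$) for all $z$ in the center. $\mathrm{Ric}$ is the Ricci operator ($\langle\mathrm{Ric}\,x,y\rangle=\varrho(x,y)$). The metric is a nilsoliton if $\mathrm{Ric}=c\cdot\mathrm{Id}+D$ for some $c\in\mathbb R$ and some derivation $D$ of $\mathfrak n$. *)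

theory Defs
  imports "HOL-Analysis.Analysis"
begin

text \<open>A finite-dimensional real Lie algebra is modelled as a Euclidean-space type 'v
(used only as an abstract finite-dimensional real vector space) with a bracket br.
The pseudo-Riemannian metric is a separate bilinear form g.\<close>

definition lie_algebra :: "('v::euclidean_space \<Rightarrow> 'v \<Rightarrow> 'v) \<Rightarrow> bool" where
  "lie_algebra br \<longleftrightarrow> bilinear br \<and> (\<forall>x. br x x = 0) \<and>
     (\<forall>x y w. br x (br y w) + br y (br w x) + br w (br x y) = 0)"

definition two_step_nilpotent :: "('v::euclidean_space \<Rightarrow> 'v \<Rightarrow> 'v) \<Rightarrow> bool" where
  "two_step_nilpotent br \<longleftrightarrow> lie_algebra br \<and> (\<forall>x y w. br (br x y) w = 0) \<and>
     (\<exists>x y. br x y \<noteq> 0)"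

definition lie_center :: "('v::euclidean_space \<Rightarrow> 'v \<Rightarrow> 'v) \<Rightarrow> 'v set" where
  "lie_center br = {z. \<forall>x. br z x = 0}"

definition derivation :: "('v::euclidean_space \<Rightarrow> 'v \<Rightarrow> 'v) \<Rightarrow> ('v \<Rightarrow> 'v) \<Rightarrow> bool" where
  "derivation br D \<longleftrightarrow> linear D \<and> (\<forall>x y. D (br x y) = br (D x) y + br x (D y))"

text \<open>Lorentzian: symmetric, bilinear, nondegenerate, of index exactly 1
(maximal dimension of a negative definite subspace is 1).\<close>
definition lorentzian :: "('v::euclidean_space \<Rightarrow> 'v \<Rightarrow> real) \<Rightarrow> bool" where
  "lorentzian g \<longleftrightarrow> bilinear g \<and> (\<forall>x y. g x y = g y x) \<and>
     (\<forall>x. (\<forall>y. g x y = 0) \<longrightarrow> x = 0) \<and>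
     (\<exists>v. g v v < 0) \<and>
     (\<forall>S. subspace S \<and> (\<forall>v\<in>S. v \<noteq> 0 \<longrightarrow> g v v < 0) \<longrightarrow> dim S \<le> 1)"

definition orth_compl :: "('v::euclidean_space \<Rightarrow> 'v \<Rightarrow> real) \<Rightarrow> 'v set \<Rightarrow> 'v set" where
  "orth_compl g A = {x. \<forall>z\<in>A. g x z = 0}"

definition orthonormal_basis ::
  "('v::euclidean_space \<Rightarrow> 'v \<Rightarrow> real) \<Rightarrow> (nat \<Rightarrow> 'v) \<Rightarrow> nat \<Rightarrow> 'v set \<Rightarrow> bool" where
  "orthonormal_basis g b k V \<longleftrightarrow> span (b ` {..<k}) = V \<and>
     (\<forall>i<k. \<forall>j<k. i \<noteq> j \<longrightarrow> g (b i) (b j) = 0) \<and>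
     (\<forall>i<k. g (b i) (b i) = 1 \<or> g (b i) (b i) = -1)"

text \<open>The involution iota: iota z_a = eps_a z_a, iota e_a = epsbar_a e_a.
Writing x = sum eps_a g(x,z_a) z_a + sum epsbar_a g(x,e_a) e_a, this is
iota x = sum g(x,z_a) z_a + sum g(x,e_a) e_a.\<close>
definition iota ::
  "('v::euclidean_space \<Rightarrow> 'v \<Rightarrow> real) \<Rightarrow> (nat \<Rightarrow> 'v) \<Rightarrow> nat \<Rightarrow> (nat \<Rightarrow> 'v) \<Rightarrow> nat \<Rightarrow> 'v \<Rightarrow> 'v" where
  "iota g zb m eb n x = (\<Sum>a<m. g x (zb a) *\<^sub>R zb a) + (\<Sum>a<n. g x (eb a) *\<^sub>R eb a)"

definition Jmap ::
  "('v::euclidean_space \<Rightarrow> 'v \<Rightarrow> 'v) \<Rightarrow> ('v \<Rightarrow> 'v \<Rightarrow> real) \<Rightarrow> 'v \<Rightarrow> 'v \<Rightarrow> 'v" where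
  "Jmap br g y x = (THE v. \<forall>w. g v w = g y (br x w))"

definition jmap ::
  "('v::euclidean_space \<Rightarrow> 'v \<Rightarrow> 'v) \<Rightarrow> ('v \<Rightarrow> 'v \<Rightarrow> real) \<Rightarrow> (nat \<Rightarrow> 'v) \<Rightarrow> nat \<Rightarrow>
     (nat \<Rightarrow> 'v) \<Rightarrow> nat \<Rightarrow> 'v \<Rightarrow> 'v \<Rightarrow> 'v" where
  "jmap br g zb m eb n y x = iota g zb m eb n (Jmap br g (iota g zb m eb n y) x)"

definition pH_type ::
  "('v::euclidean_space \<Rightarrow> 'v \<Rightarrow> 'v) \<Rightarrow> ('v \<Rightarrow> 'v \<Rightarrow> real) \<Rightarrow> (nat \<Rightarrow> 'v) \<Rightarrow> nat \<Rightarrow>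
     (nat \<Rightarrow> 'v) \<Rightarrow> nat \<Rightarrow> bool" where
  "pH_type br g zb m eb n \<longleftrightarrow>
     (\<forall>z\<in>lie_center br. \<forall>x\<in>orth_compl g (lie_center br).
        jmap br g zb m eb n z (jmap br g zb m eb n z x) =
          - (g z (iota g zb m eb n z)) *\<^sub>R x)"

text \<open>Levi-Civita connection of the left-invariant metric (Koszul formula).\<close>
definition levi_civita ::
  "('v::euclidean_space \<Rightarrow> 'v \<Rightarrow> 'v) \<Rightarrow> ('v \<Rightarrow> 'v \<Rightarrow> real) \<Rightarrow> 'v \<Rightarrow> 'v \<Rightarrow> 'v" where
  "levi_civita br g x y =
     (THE v. \<forall>w. 2 * g v w = g (br x y) w - g (br y w) x + g (br w x) y)"

definition curvature ::
  "('v::euclidean_space \<Rightarrow> 'v \<Rightarrow> 'v) \<Rightarrow> ('v \<Rightarrow> 'v \<Rightarrow> real) \<Rightarrow> 'v \<Rightarrow> 'v \<Rightarrow> 'v \<Rightarrow> 'v" where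
  "curvature br g x y w =
     levi_civita br g x (levi_civita br g y w) - levi_civita br g y (levi_civita br g x w)
     - levi_civita br g (br x y) w"

text \<open>Ricci tensor rho(x,y) = trace (w \<mapsto> R(w,x) y); trace computed in any basis.\<close>
definition ricci_tensor ::
  "('v::euclidean_space \<Rightarrow> 'v \<Rightarrow> 'v) \<Rightarrow> ('v \<Rightarrow> 'v \<Rightarrow> real) \<Rightarrow> 'v \<Rightarrow> 'v \<Rightarrow> real" where
  "ricci_tensor br g x y = (\<Sum>b\<in>Basis. curvature br g b x y \<bullet> b)"

definition ricci_op ::
  "('v::euclidean_space \<Rightarrow> 'v \<Rightarrow> 'v) \<Rightarrow> ('v \<Rightarrow> 'v \<Rightarrow> real) \<Rightarrow> 'v \<Rightarrow> 'v" where
  "ricci_op br g x = (THE v. \<forall>y. g v y = ricci_tensor br g x y)"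

definition nilsoliton ::
  "('v::euclidean_space \<Rightarrow> 'v \<Rightarrow> 'v) \<Rightarrow> ('v \<Rightarrow> 'v \<Rightarrow> real) \<Rightarrow> bool" where
  "nilsoliton br g \<longleftrightarrow>
     (\<exists>c D. derivation br D \<and> (\<forall>x. ricci_op br g x = c *\<^sub>R x + D x))"

end

theory Submission
  imports Defs
begin

text \<open>Work in an orthonormal frame z_1..z_m of the centre and e_1..e_n of E, with structure
constants C_\<gamma>(a,b) = <z_\<gamma>, [e_a, e_b]>. Since the centre is positive definite and the
metric is Lorentzian, exactly one e_t is timelike. The pH condition says that the matrices
C_\<gamma> satisfy Clifford relations; in particular their rows and columns are orthonormal.
By the Koszul formula, Ric = (n-4)/4 on the centre, and on E the Ricci form is -m/2 Id + P,
where P(a,b) = \<Sigma>_\<gamma> C_\<gamma>(t,a) C_\<gamma>(t,b) is an orthogonal projection of rank m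
that kills e_t; hence m < n. If Ric = c Id + D with D a derivation, the derivation rule on
[e_a, e_b] becomes a linear system for the C_\<gamma> with one unknown constant K. Contracting
it with the row t forces K = 1, and contracting it with C_\<gamma> itself gives n + mn = 4m,
which together with m < n leaves only m = 1, n = 2. Conversely, for the three-dimensional
Heisenberg algebra Ric - 3/2 Id is a derivation.\<close>

lemma sum_swap3: "(\<Sum>x\<in>A. \<Sum>y\<in>B. \<Sum>z\<in>C. f x y z) = (\<Sum>y\<in>B. \<Sum>z\<in>C. \<Sum>x\<in>A. f x y z)"
proof -
  have "(\<Sum>x\<in>A. \<Sum>y\<in>B. \<Sum>z\<in>C. f x y z) = (\<Sum>y\<in>B. \<Sum>x\<in>A. \<Sum>z\<in>C. f x y z)"
    by (rule sum.swap)
  also have "\<dots> = (\<Sum>y\<in>B. \<Sum>z\<in>C. \<Sum>x\<in>A. f x y z)"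
    by (rule sum.cong[OF refl]) (rule sum.swap)
  finally show ?thesis .
qed

lemma independent_pair_bilinear:
  assumes bil: "bilinear g" and vu: "g v u = 0" and uu: "g u u \<noteq> 0" and v: "v \<noteq> 0"
  shows "independent {u, v}"
proof -
  have "u \<notin> span {v}"
  proof
    assume "u \<in> span {v}"
    then obtain l where "u = l *\<^sub>R v" by (auto simp: span_singleton)
    then show False using vu uu by (simp add: bilinear_lmul[OF bil])
  qed
  then show ?thesis using v by (simp add: independent_insert)
qed

lemma negative_on_span_timelike_pair:
  fixes g :: "'a::real_vector \<Rightarrow> 'a \<Rightarrow> real"
  assumes bil: "bilinear g" and uu: "g u u = -1" and vv: "g v v = -1"
    and uv: "g u v = 0" and vu: "g v u = 0"
    and w: "w \<in> span {u, v}" "w \<noteq> 0"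
  shows "g w w < 0"
proof -
  obtain k where "w - k *\<^sub>R u \<in> span {v}"
    using w(1) span_breakdown_eq by blast
  then obtain l where "w - k *\<^sub>R u = l *\<^sub>R v" by (auto simp: span_singleton)
  then have w_eq: "w = k *\<^sub>R u + l *\<^sub>R v" by (simp add: algebra_simps)
  have "g w w = - (k * k + l * l)"
    using uu vv uv vu
    by (simp add: w_eq bilinear_ladd[OF bil] bilinear_radd[OF bil] bilinear_lmul[OF bil]
        bilinear_rmul[OF bil])
  moreover have "k \<noteq> 0 \<or> l \<noteq> 0" using w_eq w(2) by auto
  then have "k * k + l * l > 0" by (simp add: sum_squares_gt_zero_iff)
  ultimately show ?thesis by linarith
qed

lemma lorentzian_no_orthogonal_timelike_pair:
  assumes lor: "lorentzian g" and uu: "g u u = -1" and vv: "g v v = -1" and uv: "g u v = 0"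
  shows False
proof -
  have bil: "bilinear g" and vu: "g v u = 0" using lor uv by (auto simp: lorentzian_def)
  have "\<forall>w\<in>span {u, v}. w \<noteq> 0 \<longrightarrow> g w w < 0"
    using negative_on_span_timelike_pair[OF bil uu vv uv vu] by blast
  then have "dim (span {u, v}) \<le> 1"
    using lor subspace_span[of "{u, v}"] unfolding lorentzian_def by blast
  moreover have "v \<noteq> 0" using vv bilinear_lzero[OF bil] by force
  then have indep: "independent {u, v}" using independent_pair_bilinear[OF bil vu] uu by simp
  moreover have "u \<noteq> v" using uu uv by auto
  ultimately show False using dim_span_eq_card_independent[OF indep] by simp
qed

lemma nat_dims_heisenberg:
  fixes m n :: nat
  assumes "0 < m" and "m + 1 \<le> n" and eq: "n + m * n = 4 * m"
  shows "m = 1 \<and> n = 2"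
proof -
  have "(m + 1) * (m + 1) \<le> (m + 1) * n" using assms(2) by (rule mult_le_mono2)
  also have "\<dots> = 4 * m" using eq by (simp add: algebra_simps)
  finally have sq: "m * m + 2 * m + 1 \<le> 4 * m" by (simp add: algebra_simps)
  have "m = 1"
  proof (rule ccontr)
    assume "m \<noteq> 1"
    then have "2 * m \<le> m * m" using assms(1) by simp
    then show False using sq by linarith
  qed
  then show ?thesis using eq by simp
qed

locale nilpotent_frame =
  fixes br :: "'v::euclidean_space \<Rightarrow> 'v \<Rightarrow> 'v"
    and g :: "'v \<Rightarrow> 'v \<Rightarrow> real"
    and zb eb :: "nat \<Rightarrow> 'v" and m n :: nat
  assumes nilpotent: "two_step_nilpotent br"
    and bilinear_g: "bilinear g"
    and g_sym: "g x y = g y x"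
    and g_nondegenerate: "(\<And>y. g x y = 0) \<Longrightarrow> x = 0"
    and center_pos: "z \<in> lie_center br \<Longrightarrow> z \<noteq> 0 \<Longrightarrow> g z z > 0"
    and frame_Z: "orthonormal_basis g zb m (lie_center br)"
    and frame_E: "orthonormal_basis g eb n (orth_compl g (lie_center br))"
begin

abbreviation "Z \<equiv> lie_center br"
abbreviation "E \<equiv> orth_compl g (lie_center br)"

lemma bilinear_br: "bilinear br" using nilpotent
  by (simp add: two_step_nilpotent_def lie_algebra_def)
lemma br_self[simp]: "br x x = 0" using nilpotent
  by (simp add: two_step_nilpotent_def lie_algebra_def)
lemma br_br[simp]: "br (br x y) w = 0" using nilpotent by (simp add: two_step_nilpotent_def)

lemma linear_g_left: "linear (\<lambda>x. g x y)" using bilinear_g by (simp add: bilinear_def)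

lemma linear_g_right: "linear (\<lambda>y. g x y)" using bilinear_g by (simp add: bilinear_def)

lemma linear_br_left: "linear (\<lambda>x. br x y)" using bilinear_br by (simp add: bilinear_def)

lemma linear_br_right: "linear (\<lambda>y. br x y)" using bilinear_br by (simp add: bilinear_def)

lemma g_simps[simp]:
  "g (x + y) w = g x w + g y w" "g w (x + y) = g w x + g w y"
  "g (x - y) w = g x w - g y w" "g w (x - y) = g w x - g w y"
  "g (c *\<^sub>R x) w = c * g x w" "g w (c *\<^sub>R x) = c * g w x"
  "g (- x) w = - g x w" "g w (- x) = - g w x"
  "g 0 w = 0" "g w 0 = 0"
  "g (sum f A) w = (\<Sum>i\<in>A. g (f i) w)" "g w (sum f A) = (\<Sum>i\<in>A. g w (f i))"
  by (simp_all add: bilinear_ladd[OF bilinear_g] bilinear_radd[OF bilinear_g]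
    bilinear_lsub[OF bilinear_g]
    bilinear_rsub[OF bilinear_g] bilinear_lmul[OF bilinear_g] bilinear_rmul[OF bilinear_g]
      bilinear_lneg[OF bilinear_g]
    bilinear_rneg[OF bilinear_g] bilinear_lzero[OF bilinear_g] bilinear_rzero[OF bilinear_g]
    linear_sum[OF linear_g_left] linear_sum[OF linear_g_right])

lemma br_simps[simp]:
  "br (x + y) w = br x w + br y w" "br w (x + y) = br w x + br w y"
  "br (x - y) w = br x w - br y w" "br w (x - y) = br w x - br w y"
  "br (c *\<^sub>R x) w = c *\<^sub>R br x w" "br w (c *\<^sub>R x) = c *\<^sub>R br w x"
  "br (- x) w = - br x w" "br w (- x) = - br w x"
  "br 0 w = 0" "br w 0 = 0"
  "br (sum f A) w = (\<Sum>i\<in>A. br (f i) w)" "br w (sum f A) = (\<Sum>i\<in>A. br w (f i))"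
  by (simp_all add: bilinear_ladd[OF bilinear_br] bilinear_radd[OF bilinear_br] bilinear_lsub[OF
    bilinear_br]
    bilinear_rsub[OF bilinear_br] bilinear_lmul[OF bilinear_br] bilinear_rmul[OF bilinear_br]
      bilinear_lneg[OF bilinear_br]
    bilinear_rneg[OF bilinear_br] bilinear_lzero[OF bilinear_br] bilinear_rzero[OF bilinear_br]
    linear_sum[OF linear_br_left] linear_sum[OF linear_br_right])

lemma br_antisym: "br x y = - br y x"
proof -
  have "0 = br (x+y) (x+y)" by (rule br_self[symmetric])
  also have "\<dots> = br x x + br x y + (br y x + br y y)"
    by (simp only: bilinear_ladd[OF bilinear_br] bilinear_radd[OF bilinear_br] add_ac)
  finally show ?thesis by (simp add: eq_neg_iff_add_eq_0)
qed

lemma g_eqI: "(\<And>w. g x w = g y w) \<Longrightarrow> x = y"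
proof -
  assume "\<And>w. g x w = g y w"
  then have "\<And>w. g (x - y) w = 0" by simp
  then have "x - y = 0" by (rule g_nondegenerate)
  then show "x = y" by simp
qed

lemma span_zb: "span (zb ` {..<m}) = Z" using frame_Z by (simp add: orthonormal_basis_def)

lemma span_eb: "span (eb ` {..<n}) = E" using frame_E by (simp add: orthonormal_basis_def)

lemma subspace_Z: "subspace Z" using span_zb subspace_span by metis

lemma subspace_E: "subspace E" using span_eb subspace_span by metis

lemma zb_in_Z: "\<alpha> < m \<Longrightarrow> zb \<alpha> \<in> Z"
  using span_zb span_base by (metis image_eqI lessThan_iff)

lemma eb_in_E: "a < n \<Longrightarrow> eb a \<in> E"
  using span_eb span_base by (metis image_eqI lessThan_iff)

lemma br_center_left: "z \<in> Z \<Longrightarrow> br z x = 0" by (simp add: lie_center_def)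

lemma br_center_right: "z \<in> Z \<Longrightarrow> br x z = 0" using br_center_left br_antisym by metis

lemma br_in_Z: "br x y \<in> Z" by (simp add: lie_center_def)

lemma g_E_Z: "x \<in> E \<Longrightarrow> z \<in> Z \<Longrightarrow> g x z = 0" by (simp add: orth_compl_def)

lemma g_Z_E: "x \<in> E \<Longrightarrow> z \<in> Z \<Longrightarrow> g z x = 0" using g_E_Z g_sym by metis

lemma g_zb_self: "\<alpha> < m \<Longrightarrow> g (zb \<alpha>) (zb \<alpha>) = 1"
proof -
  assume a: "\<alpha> < m"
  have "g (zb \<alpha>) (zb \<alpha>) = 1 \<or> g (zb \<alpha>) (zb \<alpha>) = -1" using frame_Z a
    by (simp add: orthonormal_basis_def)
  moreover have "zb \<alpha> \<noteq> 0" using calculation by auto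
  then have "g (zb \<alpha>) (zb \<alpha>) > 0" using center_pos zb_in_Z a by auto
  ultimately show ?thesis by auto
qed

lemma g_zb_zb: "\<alpha> < m \<Longrightarrow> \<beta> < m \<Longrightarrow> g (zb \<alpha>) (zb \<beta>) = (if \<alpha> = \<beta> then 1 else 0)"
  using frame_Z g_zb_self by (auto simp: orthonormal_basis_def)

definition eps :: "nat \<Rightarrow> real" where "eps a = g (eb a) (eb a)"

lemma eps_cases: "a < n \<Longrightarrow> eps a = 1 \<or> eps a = -1" using frame_E
  by (simp add: orthonormal_basis_def eps_def)

lemma eps_square: "a < n \<Longrightarrow> eps a * eps a = 1" using eps_cases[of a] by auto

lemma g_eb_eb: "a < n \<Longrightarrow> b < n \<Longrightarrow> g (eb a) (eb b) = (if a = b then eps a else 0)"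
  using frame_E by (auto simp: orthonormal_basis_def eps_def)

lemma sum_g_zb: "\<beta> < m \<Longrightarrow> (\<Sum>\<alpha><m. f \<alpha> * g (zb \<alpha>) (zb \<beta>)) = f \<beta>"
proof -
  assume b: "\<beta> < m"
  have "(\<Sum>\<alpha><m. f \<alpha> * g (zb \<alpha>) (zb \<beta>)) = (\<Sum>\<alpha><m. if \<alpha> = \<beta> then f \<alpha> else 0)"
    by (rule sum.cong) (auto simp: g_zb_zb b)
  then show ?thesis using b by simp
qed

lemma sum_g_eb: "b < n \<Longrightarrow> (\<Sum>a<n. f a * g (eb a) (eb b)) = f b * eps b"
proof -
  assume b: "b < n"
  have "(\<Sum>a<n. f a * g (eb a) (eb b)) = (\<Sum>a<n. if a = b then f a * eps b else 0)"
    by (rule sum.cong) (auto simp: g_eb_eb b)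
  then show ?thesis using b by simp
qed

definition projZ :: "'v \<Rightarrow> 'v" where "projZ v = (\<Sum>\<alpha><m. g v (zb \<alpha>) *\<^sub>R zb \<alpha>)"

definition projE :: "'v \<Rightarrow> 'v" where "projE v = (\<Sum>a<n. (eps a * g v (eb a)) *\<^sub>R eb a)"

lemma projZ_in_Z: "projZ v \<in> Z"
  unfolding projZ_def
    by (rule subspace_sum[OF subspace_Z]) (auto intro: subspace_scale[OF subspace_Z] zb_in_Z)

lemma projE_in_E: "projE v \<in> E"
  unfolding projE_def
    by (rule subspace_sum[OF subspace_E]) (auto intro: subspace_scale[OF subspace_E] eb_in_E)

lemma g_projZ_zb: "\<beta> < m \<Longrightarrow> g (projZ v) (zb \<beta>) = g v (zb \<beta>)"
  unfolding projZ_def using sum_g_zb by simp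

lemma g_projE_eb: "b < n \<Longrightarrow> g (projE v) (eb b) = g v (eb b)"
  unfolding projE_def using sum_g_eb[of b "\<lambda>a. eps a * g v (eb a)"] eps_square
    by (simp add: mult.commute mult.left_commute)

lemma g_orth_span: "x \<in> span S \<Longrightarrow> (\<And>y. y \<in> S \<Longrightarrow> g w y = 0) \<Longrightarrow> g w x = 0"
proof (induction rule: span_induct_alt)
  case base then show ?case by simp
next
  case (step c x y) then show ?case by simp
qed

lemma diff_projZ_in_E: "v - projZ v \<in> E"
proof -
  have "g (v - projZ v) z = 0" if "z \<in> Z" for z
  proof -
    have "z \<in> span (zb ` {..<m})" using that span_zb by simp
    then show ?thesis
      by (rule g_orth_span) (auto simp: g_projZ_zb)
  qed
  then show ?thesis by (simp add: orth_compl_def)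
qed

lemma E_orth_eb_eq_0: "w \<in> E \<Longrightarrow> (\<And>b. b < n \<Longrightarrow> g w (eb b) = 0) \<Longrightarrow> w = 0"
proof -
  assume wE: "w \<in> E" and h: "\<And>b. b < n \<Longrightarrow> g w (eb b) = 0"
  have hE: "g w y = 0" if "y \<in> E" for y
  proof -
    have "y \<in> span (eb ` {..<n})" using that span_eb by simp
    then show ?thesis by (rule g_orth_span) (auto simp: h)
  qed
  show "w = 0"
  proof (rule g_nondegenerate)
    fix x
    have "g w x = g w (x - projZ x) + g w (projZ x)" by simp
    also have "\<dots> = 0" using hE[OF diff_projZ_in_E] g_E_Z[OF wE projZ_in_Z] by simp
    finally show "g w x = 0" .
  qed
qed

lemma frame_decomp: "v = projZ v + projE v"
proof -
  have "v - projZ v - projE v = 0"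
  proof (rule E_orth_eb_eq_0)
    show "v - projZ v - projE v \<in> E"
      using diff_projZ_in_E projE_in_E subspace_diff[OF subspace_E] by blast
    fix b assume b: "b < n"
    have "g (projZ v) (eb b) = 0" using g_Z_E[OF eb_in_E[OF b] projZ_in_Z] .
    then show "g (v - projZ v - projE v) (eb b) = 0" using g_projE_eb[OF b] by simp
  qed
  then show ?thesis by (simp add: algebra_simps)
qed

lemma projE_Z: "z \<in> Z \<Longrightarrow> projE z = 0"
  unfolding projE_def using g_Z_E eb_in_E by simp

lemma projZ_id: "z \<in> Z \<Longrightarrow> z = projZ z" using frame_decomp projE_Z by (metis add.right_neutral)

lemma g_frame_expansion: "g v w = (\<Sum>\<alpha><m. g v (zb \<alpha>) * g (zb \<alpha>) w)
  + (\<Sum>a<n. eps a * g v (eb a) * g (eb a) w)"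
proof -
  have "g v w = g (projZ v + projE v) w" using frame_decomp by simp
  then show ?thesis by (simp add: projZ_def projE_def)
qed

lemma linear_frame_expansion: "linear f \<Longrightarrow> f v = (\<Sum>\<alpha><m. g v (zb \<alpha>) *\<^sub>R f (zb \<alpha>))
  + (\<Sum>a<n. (eps a * g v (eb a)) *\<^sub>R f (eb a))"
proof -
  assume l: "linear f"
  have "f v = f (projZ v) + f (projE v)" using frame_decomp linear_add[OF l] by metis
  then show ?thesis by (simp add: projZ_def projE_def linear_sum[OF l] linear_scale[OF l])
qed

lemma linear_eq_0_on_frame: "linear f \<Longrightarrow> (\<And>\<alpha>. \<alpha> < m \<Longrightarrow> f (zb \<alpha>) = 0)
  \<Longrightarrow> (\<And>a. a < n \<Longrightarrow> f (eb a) = 0) \<Longrightarrow> f v = 0"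
  by (subst linear_frame_expansion[of f v]) (auto intro!: sum.neutral)

text \<open>The vector representing a linear form via g; it makes the THE-definitions of J,
the Levi-Civita connection and the Ricci operator explicit.\<close>

definition riesz :: "('v \<Rightarrow> real) \<Rightarrow> 'v" where
  "riesz \<phi> = (\<Sum>\<alpha><m. \<phi> (zb \<alpha>) *\<^sub>R zb \<alpha>) + (\<Sum>a<n. (eps a * \<phi> (eb a)) *\<^sub>R eb a)"

lemma g_riesz: "linear \<phi> \<Longrightarrow> g (riesz \<phi>) w = \<phi> w"
proof -
  assume l: "linear \<phi>"
  have "\<phi> w = (\<Sum>\<alpha><m. g w (zb \<alpha>) * \<phi> (zb \<alpha>)) + (\<Sum>a<n. (eps a * g w (eb a)) * \<phi> (eb a))"
    using linear_frame_expansion[OF l, of w] by simp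
  then show ?thesis by (simp add: riesz_def g_sym[of w] mult_ac)
qed

lemma the_riesz:
  assumes "linear \<phi>"
  shows "(THE v. \<forall>w. g v w = \<phi> w) = riesz \<phi>"
proof (rule the_equality)
  show "\<forall>w. g (riesz \<phi>) w = \<phi> w" using g_riesz[OF assms] by blast
  fix v assume "\<forall>w. g v w = \<phi> w"
  then show "v = riesz \<phi>" using g_riesz[OF assms] by (intro g_eqI) simp
qed

abbreviation J where "J \<equiv> Jmap br g"

lemma linear_g_br: "linear (\<lambda>w. g y (br x w))"
  by (rule linearI) simp_all

lemma g_J: "g (J y x) w = g y (br x w)"
proof -
  have "J y x = riesz (\<lambda>w. g y (br x w))"
    unfolding Jmap_def by (rule the_riesz[OF linear_g_br])
  then show ?thesis using g_riesz[OF linear_g_br] by simp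
qed

lemma J_in_E: "J y x \<in> E"
  by (simp add: orth_compl_def g_J br_center_right)

lemma J_center: "z \<in> Z \<Longrightarrow> J y z = 0"
  by (rule g_nondegenerate) (simp add: g_J br_center_left)

lemma linear_J: "linear (\<lambda>x. J y x)"
  by (rule linearI; rule g_eqI; simp add: g_J)

lemma linear_J_param: "linear (\<lambda>y. J y x)"
  by (rule linearI; rule g_eqI; simp add: g_J)

lemma J_simps[simp]:
  "J (y1 + y2) x = J y1 x + J y2 x" "J (c *\<^sub>R y) x = c *\<^sub>R J y x"
  "J y (x1 + x2) = J y x1 + J y x2" "J y (c *\<^sub>R x) = c *\<^sub>R J y x"
  "J y (- x) = - J y x" "J (- y) x = - J y x" "J 0 x = 0" "J y 0 = 0"
  "J y (x1 - x2) = J y x1 - J y x2" "J (y1 - y2) x = J y1 x - J y2 x"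
  using linear_add[OF linear_J_param] linear_scale[OF linear_J_param] linear_add[OF linear_J]
    linear_scale[OF linear_J]
    linear_neg[OF linear_J_param] linear_neg[OF linear_J] linear_0[OF linear_J_param]
      linear_0[OF linear_J]
    linear_diff[OF linear_J_param] linear_diff[OF linear_J] by auto

abbreviation lc where "lc \<equiv> levi_civita br g"

definition koszul :: "'v \<Rightarrow> 'v \<Rightarrow> 'v \<Rightarrow> real" where
  "koszul x y w = g (br x y) w - g (br y w) x + g (br w x) y"

lemma koszul_simps[simp]:
  "koszul (x1 + x2) y w = koszul x1 y w + koszul x2 y w"
  "koszul (c *\<^sub>R x) y w = c * koszul x y w"
  "koszul x (y1 + y2) w = koszul x y1 w + koszul x y2 w"
  "koszul x (c *\<^sub>R y) w = c * koszul x y w"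
  "koszul x y (w1 + w2) = koszul x y w1 + koszul x y w2"
  "koszul x y (c *\<^sub>R w) = c * koszul x y w"
  by (simp_all add: koszul_def algebra_simps)

lemma linear_koszul: "linear (\<lambda>w. koszul x y w / 2)"
  by (rule linearI) (simp_all add: add_divide_distrib)

lemma lc_koszul: "2 * g (lc x y) w = koszul x y w"
proof -
  let ?\<phi> = "\<lambda>w. koszul x y w / 2"
  have rg: "g (riesz ?\<phi>) w = koszul x y w / 2" for w using g_riesz[OF linear_koszul] by simp
  have "lc x y = riesz ?\<phi>"
    unfolding levi_civita_def koszul_def[symmetric]
  proof (rule the_equality)
    show "\<forall>w. 2 * g (riesz ?\<phi>) w = koszul x y w" by (simp add: rg)
    fix v assume "\<forall>w. 2 * g v w = koszul x y w"
    then have "g v w = g (riesz ?\<phi>) w" for w using rg[of w]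
      by (metis nonzero_mult_div_cancel_left zero_neq_numeral)
    then show "v = riesz ?\<phi>" by (rule g_eqI)
  qed
  then show ?thesis by (simp add: rg)
qed

lemma g_lc: "g (lc x y) w = koszul x y w / 2"
  using lc_koszul[of x y w] by simp

lemma lc_eqI: "(\<And>w. 2 * g v w = koszul x y w) \<Longrightarrow> lc x y = v"
proof -
  assume h: "\<And>w. 2 * g v w = koszul x y w"
  show ?thesis
  proof (rule g_eqI)
    fix w show "g (lc x y) w = g v w" using h[of w] g_lc[of x y w] by simp
  qed
qed

lemma linear_lc_left: "linear (\<lambda>x. lc x y)"
  by (rule linearI; rule lc_eqI; simp add: g_lc)

lemma linear_lc_right: "linear (\<lambda>y. lc x y)"
  by (rule linearI; rule lc_eqI; simp add: g_lc)

lemma lc_simps[simp]: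
  "lc (x1 + x2) y = lc x1 y + lc x2 y" "lc (c *\<^sub>R x) y = c *\<^sub>R lc x y"
  "lc x (y1 + y2) = lc x y1 + lc x y2" "lc x (c *\<^sub>R y) = c *\<^sub>R lc x y"
  "lc 0 y = 0" "lc x 0 = 0"
  "lc (x1 - x2) y = lc x1 y - lc x2 y" "lc x (y1 - y2) = lc x y1 - lc x y2"
  "lc (- x) y = - lc x y" "lc x (- y) = - lc x y"
  using linear_add[OF linear_lc_left] linear_scale[OF linear_lc_left] linear_add[OF linear_lc_right]
    linear_scale[OF linear_lc_right]
    linear_0[OF linear_lc_left] linear_0[OF linear_lc_right] linear_diff[OF linear_lc_left]
      linear_diff[OF linear_lc_right]
    linear_neg[OF linear_lc_left] linear_neg[OF linear_lc_right] by auto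

lemma lc_E_E: "x \<in> E \<Longrightarrow> y \<in> E \<Longrightarrow> lc x y = (1/2) *\<^sub>R br x y"
proof -
  assume xE: "x \<in> E" and yE: "y \<in> E"
  show ?thesis
  proof (rule lc_eqI)
    fix w
    have "g (br y w) x = 0" "g (br w x) y = 0"
      using g_Z_E[OF xE br_in_Z] g_Z_E[OF yE br_in_Z] by auto
    then show "2 * g ((1/2) *\<^sub>R br x y) w = koszul x y w" by (simp add: koszul_def)
  qed
qed

lemma g_br_swap: "g (br w x) z = - g z (br x w)"
  using g_sym br_antisym by (metis g_simps(8))

lemma lc_Z_right: "z \<in> Z \<Longrightarrow> lc x z = -(1/2) *\<^sub>R J z x"
proof -
  assume zZ: "z \<in> Z"
  show ?thesis
  proof (rule lc_eqI)
    fix w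
    have "g (br x z) w = 0" "g (br z w) x = 0"
      using br_center_left[OF zZ] br_center_right[OF zZ] by auto
    then show "2 * g (-(1/2) *\<^sub>R J z x) w = koszul x z w" by (simp add: koszul_def g_J g_br_swap)
  qed
qed

lemma lc_Z_left: "z \<in> Z \<Longrightarrow> lc z x = -(1/2) *\<^sub>R J z x"
proof -
  assume zZ: "z \<in> Z"
  show ?thesis
  proof (rule lc_eqI)
    fix w
    have "g (br z x) w = 0" "g (br w z) x = 0"
      using br_center_left[OF zZ] br_center_right[OF zZ] by auto
    then show "2 * g (-(1/2) *\<^sub>R J z x) w = koszul z x w"
      by (simp add: koszul_def g_J g_sym[of _ z])
  qed
qed

lemma lc_Z_right_in_E: "z \<in> Z \<Longrightarrow> lc x z \<in> E"
  using lc_Z_right J_in_E subspace_scale[OF subspace_E] subspace_neg[OF subspace_E] by simp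

lemma lc_Z_left_in_E: "z \<in> Z \<Longrightarrow> lc z x \<in> E"
  using lc_Z_left J_in_E subspace_scale[OF subspace_E] subspace_neg[OF subspace_E] by simp

lemma lc_E_E_in_Z: "x \<in> E \<Longrightarrow> y \<in> E \<Longrightarrow> lc x y \<in> Z"
  using lc_E_E br_in_Z subspace_scale[OF subspace_Z] by simp

lemma lc_Z_Z: "z \<in> Z \<Longrightarrow> z' \<in> Z \<Longrightarrow> lc z z' = 0"
  using lc_Z_left J_center by simp

abbreviation R where "R \<equiv> curvature br g"

lemma linear_curvature_1: "linear (\<lambda>u. R u x y)"
  by (rule linearI) (simp_all add: curvature_def algebra_simps)

lemma linear_curvature_2: "linear (\<lambda>x. R u x y)"
  by (rule linearI) (simp_all add: curvature_def algebra_simps)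

lemma linear_curvature_3: "linear (\<lambda>y. R u x y)"
  by (rule linearI) (simp_all add: curvature_def algebra_simps)

lemma curvature_simps[simp]:
  "R u x (y1 + y2) = R u x y1 + R u x y2" "R u x (c *\<^sub>R y) = c *\<^sub>R R u x y"
  "R u (x1 + x2) y = R u x1 y + R u x2 y" "R u (c *\<^sub>R x) y = c *\<^sub>R R u x y"
  using linear_add[OF linear_curvature_3] linear_scale[OF linear_curvature_3] linear_add[OF
    linear_curvature_2] linear_scale[OF linear_curvature_2]
  by auto

lemma scaleR_in_Z: "x \<in> Z \<Longrightarrow> c *\<^sub>R x \<in> Z" using subspace_scale[OF subspace_Z] by blast

lemma scaleR_in_E: "x \<in> E \<Longrightarrow> c *\<^sub>R x \<in> E" using subspace_scale[OF subspace_E] by blast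

lemma curvature_Z_E_E: "z \<in> Z \<Longrightarrow> x \<in> E \<Longrightarrow> y \<in> E \<Longrightarrow> R z x y = (1/4) *\<^sub>R br x (J z y)"
proof -
  assume zZ: "z \<in> Z" and xE: "x \<in> E" and yE: "y \<in> E"
  have 1: "lc z (lc x y) = 0" using lc_Z_Z[OF zZ lc_E_E_in_Z[OF xE yE]] .
  have 2: "lc x (lc z y) = -(1/4) *\<^sub>R br x (J z y)"
    using lc_Z_left[OF zZ, of y] lc_E_E[OF xE scaleR_in_E[OF J_in_E]] by simp
  have 3: "br z x = 0" using br_center_left[OF zZ] .
  show ?thesis unfolding curvature_def using 1 2 3 by simp
qed

lemma curvature_E_E_E: "e \<in> E \<Longrightarrow> x \<in> E \<Longrightarrow> y \<in> E \<Longrightarrow>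
  R e x y = -(1/4) *\<^sub>R J (br x y) e + (1/4) *\<^sub>R J (br e y) x + (1/2) *\<^sub>R J (br e x) y"
proof -
  assume eE: "e \<in> E" and xE: "x \<in> E" and yE: "y \<in> E"
  have a: "lc e ((1/2) *\<^sub>R br x y) = -(1/2) *\<^sub>R J ((1/2) *\<^sub>R br x y) e"
    by (rule lc_Z_right[OF scaleR_in_Z[OF br_in_Z]])
  have b: "lc x ((1/2) *\<^sub>R br e y) = -(1/2) *\<^sub>R J ((1/2) *\<^sub>R br e y) x"
    by (rule lc_Z_right[OF scaleR_in_Z[OF br_in_Z]])
  have 1: "lc e (lc x y) = -(1/4) *\<^sub>R J (br x y) e"
    using lc_E_E[OF xE yE] a by simp
  have 2: "lc x (lc e y) = -(1/4) *\<^sub>R J (br e y) x"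
    using lc_E_E[OF eE yE] b by simp
  have 3: "lc (br e x) y = -(1/2) *\<^sub>R J (br e x) y" using lc_Z_left[OF br_in_Z] .
  show ?thesis unfolding curvature_def using 1 2 3 by simp
qed

lemma curvature_E_Z_Z: "e \<in> E \<Longrightarrow> z \<in> Z \<Longrightarrow> z' \<in> Z \<Longrightarrow> R e z z' = -(1/4) *\<^sub>R J z (J z' e)"
proof -
  assume eE: "e \<in> E" and zZ: "z \<in> Z" and zZ': "z' \<in> Z"
  have 1: "lc e (lc z z') = 0" using lc_Z_Z[OF zZ zZ'] by simp
  have 2: "lc z (lc e z') = (1/4) *\<^sub>R J z (J z' e)"
    using lc_Z_right[OF zZ', of e] lc_Z_left[OF zZ] by simp
  have 3: "br e z = 0" using br_center_right[OF zZ] .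
  show ?thesis unfolding curvature_def using 1 2 3 by simp
qed

lemma curvature_Z_Z_Z: "z \<in> Z \<Longrightarrow> z1 \<in> Z \<Longrightarrow> z2 \<in> Z \<Longrightarrow> R z z1 z2 = 0"
  unfolding curvature_def using lc_Z_Z br_center_left by simp

lemma curvature_Z_E_Z_in_E: "z' \<in> Z \<Longrightarrow> x \<in> E \<Longrightarrow> z \<in> Z \<Longrightarrow> R z' x z \<in> E"
  unfolding curvature_def using lc_Z_Z br_center_left lc_Z_left_in_E by simp

lemma curvature_E_E_Z_in_Z: "e \<in> E \<Longrightarrow> x \<in> E \<Longrightarrow> z \<in> Z \<Longrightarrow> R e x z \<in> Z"
  unfolding curvature_def
    using lc_Z_Z[OF br_in_Z] lc_E_E_in_Z[OF _ lc_Z_right_in_E] subspace_diff[OF subspace_Z] by simp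

lemma curvature_Z_Z_E_in_E: "z' \<in> Z \<Longrightarrow> z \<in> Z \<Longrightarrow> x \<in> E \<Longrightarrow> R z' z x \<in> E"
  unfolding curvature_def using br_center_left lc_Z_left_in_E subspace_diff[OF subspace_E] by simp

lemma curvature_E_Z_E_in_Z: "e \<in> E \<Longrightarrow> z \<in> Z \<Longrightarrow> x \<in> E \<Longrightarrow> R e z x \<in> Z"
  unfolding curvature_def using br_center_right lc_E_E_in_Z lc_Z_Z lc_Z_left_in_E by simp

lemma g_Basis_expansion: "(\<Sum>b\<in>Basis. g b w * (v \<bullet> b)) = g v w"
proof -
  have "g v w = g (\<Sum>b\<in>Basis. (v \<bullet> b) *\<^sub>R b) w" by (simp add: euclidean_representation)
  then show ?thesis by (simp add: mult.commute)
qed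

lemma trace_frame: "linear L \<Longrightarrow> (\<Sum>b\<in>Basis. L b \<bullet> b) =
   (\<Sum>\<alpha><m. g (L (zb \<alpha>)) (zb \<alpha>)) + (\<Sum>a<n. eps a * g (L (eb a)) (eb a))"
proof -
  assume l: "linear L"
  have "(\<Sum>b\<in>Basis. L b \<bullet> b) = (\<Sum>b\<in>Basis. (\<Sum>\<alpha><m. g b (zb \<alpha>) * (L (zb \<alpha>) \<bullet> b)) +
          (\<Sum>a<n. eps a * (g b (eb a) * (L (eb a) \<bullet> b))))"
    by (rule sum.cong[OF refl], subst linear_frame_expansion[OF l], simp add: inner_sum_left
      inner_add_left mult.assoc)
  also have "\<dots> = (\<Sum>\<alpha><m. \<Sum>b\<in>Basis. g b (zb \<alpha>) * (L (zb \<alpha>) \<bullet> b)) +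
          (\<Sum>a<n. eps a * (\<Sum>b\<in>Basis. g b (eb a) * (L (eb a) \<bullet> b)))"
    by (simp add: sum.distrib sum_distrib_left sum.swap[of _ Basis])
  also have "\<dots> = (\<Sum>\<alpha><m. g (L (zb \<alpha>)) (zb \<alpha>)) + (\<Sum>a<n. eps a * g (L (eb a)) (eb a))"
    by (simp add: g_Basis_expansion)
  finally show ?thesis .
qed

abbreviation rho where "rho \<equiv> ricci_tensor br g"

lemma ricci_tensor_frame: "rho x y = (\<Sum>\<alpha><m. g (R (zb \<alpha>) x y) (zb \<alpha>))
  + (\<Sum>a<n. eps a * g (R (eb a) x y) (eb a))"
  unfolding ricci_tensor_def by (rule trace_frame[OF linear_curvature_1])

lemma linear_ricci_tensor: "linear (rho x)"
  by (rule linearI) (simp_all add: ricci_tensor_def inner_add_left sum.distrib sum_distrib_left)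

lemma linear_ricci_tensor_left: "linear (\<lambda>x. rho x y)"
  by (rule linearI) (simp_all add: ricci_tensor_def inner_add_left sum.distrib sum_distrib_left)

lemma g_br_br: "g (br e x) (br e y) = (\<Sum>\<gamma><m. g (J (zb \<gamma>) x) e * g (J (zb \<gamma>) y) e)"
proof -
  have "g (br e x) (br e y) = (\<Sum>\<alpha><m. g (br e x) (zb \<alpha>) * g (zb \<alpha>) (br e y))"
    using g_frame_expansion[of "br e x" "br e y"] g_E_Z[OF eb_in_E br_in_Z]
      by (simp add: g_sym[of "eb _"])
  also have "\<dots> = (\<Sum>\<gamma><m. g (J (zb \<gamma>) x) e * g (J (zb \<gamma>) y) e)"
    by (rule sum.cong[OF refl]) (simp add: g_J g_sym[of "br _ _"] br_antisym[of e])
  finally show ?thesis .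
qed

lemma g_E_E: "x \<in> E \<Longrightarrow> y \<in> E \<Longrightarrow> g x y = (\<Sum>a<n. eps a * g x (eb a) * g y (eb a))"
  using g_frame_expansion[of x y] g_Z_E zb_in_Z by (simp add: g_sym[of "eb _" y])

lemma ricci_tensor_E_E: "x \<in> E \<Longrightarrow> y \<in> E \<Longrightarrow> rho x y = -(1/2) * (\<Sum>\<gamma><m. g (J (zb \<gamma>) x) (J (zb \<gamma>) y))"
proof -
  assume xE: "x \<in> E" and yE: "y \<in> E"
  have Zp: "g (R (zb \<gamma>) x y) (zb \<gamma>) = (1/4) * g (J (zb \<gamma>) x) (J (zb \<gamma>) y)" if "\<gamma> < m" for \<gamma>
    using curvature_Z_E_E[OF zb_in_Z[OF that] xE yE] by (simp add: g_J g_sym[of "br _ _"])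
  have Ep: "g (R (eb a) x y) (eb a) = -(3/4) * g (br (eb a) x) (br (eb a) y)" if "a < n" for a
  proof -
    have "g (R (eb a) x y) (eb a) = -(1/4) * g (br (eb a) y) (br (eb a) x) - (1/2)
      * g (br (eb a) x) (br (eb a) y)"
      using curvature_E_E_E[OF eb_in_E[OF that] xE yE] by (simp add: g_J br_antisym[of _ "eb a"])
    then show ?thesis by (simp add: g_sym[of "br (eb a) y"])
  qed
  have "rho x y = (1/4) * (\<Sum>\<gamma><m. g (J (zb \<gamma>) x) (J (zb \<gamma>) y)) -
     (3/4) * (\<Sum>a<n. eps a * g (br (eb a) x) (br (eb a) y))"
    by (simp add: ricci_tensor_frame Zp Ep sum_distrib_left sum_negf mult_ac)
  also have "(\<Sum>a<n. eps a * g (br (eb a) x) (br (eb a) y)) = (\<Sum>\<gamma><m. g (J (zb \<gamma>) x) (J (zb \<gamma>) y))"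
    by (simp add: g_br_br g_E_E[OF J_in_E J_in_E] sum_distrib_left sum.swap[of _ "{..<n}"] mult_ac)
  finally show ?thesis by simp
qed

lemma ricci_tensor_Z_Z: "z \<in> Z \<Longrightarrow> z' \<in> Z \<Longrightarrow> rho z z' = (1/4)
  * (\<Sum>a<n. eps a * g (J z (eb a)) (J z' (eb a)))"
proof -
  assume zZ: "z \<in> Z" and zZ': "z' \<in> Z"
  have Ep: "g (R (eb a) z z') (eb a) = (1/4) * g (J z (eb a)) (J z' (eb a))" if "a < n" for a
    using curvature_E_Z_Z[OF eb_in_E[OF that] zZ zZ'] by (simp add: g_J br_antisym[of "J _ _"])
  show ?thesis
    by (simp add: ricci_tensor_frame Ep curvature_Z_Z_Z[OF zb_in_Z zZ zZ'] sum_distrib_left mult_ac)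
qed

lemma ricci_tensor_E_Z: "x \<in> E \<Longrightarrow> z \<in> Z \<Longrightarrow> rho x z = 0"
  by (simp add: ricci_tensor_frame g_E_Z[OF curvature_Z_E_Z_in_E[OF zb_in_Z]] g_Z_E[OF eb_in_E
    curvature_E_E_Z_in_Z[OF eb_in_E]] zb_in_Z)

lemma ricci_tensor_Z_E: "z \<in> Z \<Longrightarrow> x \<in> E \<Longrightarrow> rho z x = 0"
  by (simp add: ricci_tensor_frame g_E_Z[OF curvature_Z_Z_E_in_E[OF zb_in_Z]] g_Z_E[OF eb_in_E
    curvature_E_Z_E_in_Z[OF eb_in_E]] zb_in_Z)

abbreviation Ric where "Ric \<equiv> ricci_op br g"

lemma ricci_op_frame: "Ric x = (\<Sum>\<alpha><m. rho x (zb \<alpha>) *\<^sub>R zb \<alpha>)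
  + (\<Sum>a<n. (eps a * rho x (eb a)) *\<^sub>R eb a)"
  unfolding ricci_op_def the_riesz[OF linear_ricci_tensor] riesz_def ..

lemma g_ricci_op: "g (Ric x) y = rho x y"
  unfolding ricci_op_def the_riesz[OF linear_ricci_tensor] by (rule g_riesz[OF linear_ricci_tensor])

lemma linear_ricci_op: "linear Ric"
  by (rule linearI; rule g_eqI; simp add: g_ricci_op linear_add[OF linear_ricci_tensor_left]
    linear_scale[OF linear_ricci_tensor_left])

definition C :: "nat \<Rightarrow> nat \<Rightarrow> nat \<Rightarrow> real" where
  "C \<gamma> a b = g (zb \<gamma>) (br (eb a) (eb b))"

lemma C_antisym: "C \<gamma> a b = - C \<gamma> b a"
  unfolding C_def using br_antisym by (metis g_simps(8))

lemma C_diag[simp]: "C \<gamma> a a = 0"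
  unfolding C_def by simp

lemma g_J_J: "g (J (zb \<beta>) (eb a)) (J (zb \<gamma>) (eb b)) = (\<Sum>c<n. eps c * C \<beta> a c * C \<gamma> b c)"
proof -
  have "g (J (zb \<beta>) (eb a)) (J (zb \<gamma>) (eb b)) =
     (\<Sum>c<n. eps c * g (J (zb \<beta>) (eb a)) (eb c) * g (J (zb \<gamma>) (eb b)) (eb c))"
    by (rule g_E_E[OF J_in_E J_in_E])
  then show ?thesis by (simp add: g_J C_def)
qed

lemma ricci_tensor_eb_eb: "a < n \<Longrightarrow> b < n \<Longrightarrow> rho (eb a) (eb b) = -(1/2)
  * (\<Sum>\<gamma><m. \<Sum>c<n. eps c * C \<gamma> a c * C \<gamma> b c)"
  by (simp add: ricci_tensor_E_E eb_in_E g_J_J)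

lemma ricci_tensor_zb_zb: "\<beta> < m \<Longrightarrow> \<gamma> < m \<Longrightarrow> rho (zb \<beta>) (zb \<gamma>) = (1/4)
  * (\<Sum>a<n. eps a * (\<Sum>c<n. eps c * C \<beta> a c * C \<gamma> a c))"
  by (simp add: ricci_tensor_Z_Z zb_in_Z g_J_J)

lemma ricci_op_zb: "\<gamma> < m \<Longrightarrow> Ric (zb \<gamma>) = (\<Sum>\<alpha><m. rho (zb \<gamma>) (zb \<alpha>) *\<^sub>R zb \<alpha>)"
  by (simp add: ricci_op_frame ricci_tensor_Z_E zb_in_Z eb_in_E)

lemma ricci_op_eb: "a < n \<Longrightarrow> Ric (eb a) = (\<Sum>b<n. (eps b * rho (eb a) (eb b)) *\<^sub>R eb b)"
  by (simp add: ricci_op_frame ricci_tensor_E_Z zb_in_Z eb_in_E)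

lemma br_eb_eb: "br (eb a) (eb b) = (\<Sum>\<beta><m. C \<beta> a b *\<^sub>R zb \<beta>)"
  using projZ_id[OF br_in_Z] unfolding projZ_def C_def by (simp add: g_sym[of "br _ _"])

lemma dim_center_pos: "m > 0"
proof (rule ccontr)
  assume "\<not> m > 0"
  then have "Z = {0}" using span_zb by simp
  moreover obtain x y where "br x y \<noteq> 0" using nilpotent by (auto simp: two_step_nilpotent_def)
  ultimately show False using br_in_Z by blast
qed

lemma ricci_op_simps: "Ric (x + y) = Ric x + Ric y" "Ric (c *\<^sub>R x) = c *\<^sub>R Ric x" "Ric 0 = 0"
  using linear_add[OF linear_ricci_op] linear_scale[OF linear_ricci_op] linear_0[OF
    linear_ricci_op] by auto

lemma ricci_op_in_Z: "z \<in> Z \<Longrightarrow> Ric z \<in> Z"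
proof -
  assume zZ: "z \<in> Z"
  have "Ric z = (\<Sum>\<alpha><m. rho z (zb \<alpha>) *\<^sub>R zb \<alpha>)"
    by (simp add: ricci_op_frame ricci_tensor_Z_E[OF zZ eb_in_E])
  moreover have "(\<Sum>\<alpha><m. rho z (zb \<alpha>) *\<^sub>R zb \<alpha>) \<in> Z"
    by (rule subspace_sum[OF subspace_Z]) (auto intro: scaleR_in_Z zb_in_Z)
  ultimately show ?thesis by simp
qed

lemma Z_eqI:
  assumes "x \<in> Z" "y \<in> Z" "\<And>\<gamma>. \<gamma> < m \<Longrightarrow> g (zb \<gamma>) x = g (zb \<gamma>) y"
  shows "x = y"
  using projZ_id[OF assms(1)] projZ_id[OF assms(2)] assms(3) by (simp add: projZ_def g_sym)

lemma derivation_on_frame: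
  assumes lin: "linear D" and DZ: "\<And>z. z \<in> Z \<Longrightarrow> D z \<in> Z"
    and Deb: "\<And>a b. a < n \<Longrightarrow> b < n \<Longrightarrow>
      D (br (eb a) (eb b)) = br (D (eb a)) (eb b) + br (eb a) (D (eb b))"
  shows "derivation br D"
proof -
  define F where "F x y = D (br x y) - br (D x) y - br x (D y)" for x y
  have F_lin1: "linear (\<lambda>x. F x y)" and F_lin2: "linear (\<lambda>y. F x y)" for x y
    unfolding F_def by
      (rule linearI; simp add: linear_add[OF lin] linear_scale[OF lin] algebra_simps)+
  have F_Z1: "F z y = 0" and F_Z2: "F x z = 0" if "z \<in> Z" for x y z
    unfolding F_def using that br_center_left br_center_right DZ linear_0[OF lin] by simp_all
  have F_eb: "F (eb a) (eb b) = 0" if "a < n" "b < n" for a b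
    using Deb[OF that] by (simp add: F_def)
  have "F (eb a) y = 0" if "a < n" for a y
    by (rule linear_eq_0_on_frame[OF F_lin2]) (auto simp: F_Z2 zb_in_Z F_eb that)
  then have "F x y = 0" for x y
    by (intro linear_eq_0_on_frame[OF F_lin1, of y x]) (auto simp: F_Z1 zb_in_Z)
  then show ?thesis unfolding derivation_def F_def using lin by (simp add: algebra_simps)
qed

lemma g_zb_br_ricci_op_left: "a < n \<Longrightarrow> g (zb \<gamma>) (br (Ric (eb a)) (eb b))
  = (\<Sum>d<n. eps d * rho (eb a) (eb d) * C \<gamma> d b)"
  by (simp add: ricci_op_eb C_def mult_ac)

lemma g_zb_br_ricci_op_right: "b < n \<Longrightarrow> g (zb \<gamma>) (br (eb a) (Ric (eb b)))
  = (\<Sum>d<n. eps d * rho (eb b) (eb d) * C \<gamma> a d)"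
  by (simp add: ricci_op_eb C_def mult_ac)

end

locale pH_frame = nilpotent_frame +
  assumes pH: "pH_type br g zb m eb n"
begin

abbreviation io where "io \<equiv> iota g zb m eb n"

lemma iota_Z: "z \<in> Z \<Longrightarrow> io z = z"
proof -
  assume zZ: "z \<in> Z"
  have "io z = projZ z" unfolding iota_def projZ_def using g_Z_E[OF eb_in_E zZ] by simp
  then show ?thesis using projZ_id[OF zZ] by simp
qed

lemma iota_E: "x \<in> E \<Longrightarrow> io x = (\<Sum>a<n. g x (eb a) *\<^sub>R eb a)"
  unfolding iota_def using g_E_Z[OF _ zb_in_Z] by simp

lemma g_iota_E: "x \<in> E \<Longrightarrow> c < n \<Longrightarrow> g (io x) (eb c) = g x (eb c) * eps c"
  by (simp add: iota_E sum_g_eb)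

lemma pH_J: "z \<in> Z \<Longrightarrow> x \<in> E \<Longrightarrow> io (J z (io (J z x))) = -(g z z) *\<^sub>R x"
  using pH unfolding pH_type_def jmap_def by (simp add: iota_Z)

lemma pH_structure_constants: "z \<in> Z \<Longrightarrow> a < n \<Longrightarrow> c < n \<Longrightarrow>
  (\<Sum>b<n. g z (br (eb a) (eb b)) * g z (br (eb b) (eb c))) = -(g z z) * (if a = c then 1 else 0)"
proof -
  assume zZ: "z \<in> Z" and a: "a < n" and c: "c < n"
  have "g (io (J z (io (J z (eb a))))) (eb c) = -(g z z) * g (eb a) (eb c)"
    using pH_J[OF zZ eb_in_E[OF a]] by simp
  moreover have "g (io (J z (io (J z (eb a))))) (eb c) =
     (\<Sum>b<n. g z (br (eb a) (eb b)) * g z (br (eb b) (eb c))) * eps c"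
  proof -
    have A: "g (io (J z (io (J z (eb a))))) (eb c) = g z (br (io (J z (eb a))) (eb c)) * eps c"
      using g_iota_E[OF J_in_E c] g_J by simp
    have B: "g z (br (io (J z (eb a))) (eb c))
      = (\<Sum>b<n. g z (br (eb a) (eb b)) * g z (br (eb b) (eb c)))"
      by (simp add: iota_E[OF J_in_E] g_J)
    show ?thesis by (simp only: A B)
  qed
  ultimately have "(\<Sum>b<n. g z (br (eb a) (eb b)) * g z (br (eb b) (eb c))) * eps c
      = -(g z z) * (if a = c then eps c else 0)" using g_eb_eb[OF a c] by auto
  then have "(\<Sum>b<n. g z (br (eb a) (eb b)) * g z (br (eb b) (eb c))) * eps c * eps c
      = -(g z z) * (if a = c then 1 else 0) * eps c * eps c"
    by (auto simp: mult_ac)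
  then show ?thesis using eps_square[OF c] by (simp add: mult.assoc)
qed

lemma clifford_square: "\<beta> < m \<Longrightarrow> a < n \<Longrightarrow> c < n \<Longrightarrow> (\<Sum>b<n. C \<beta> a b * C \<beta> b c)
  = -(if a = c then 1 else 0)"
  using pH_structure_constants[OF zb_in_Z] g_zb_self unfolding C_def by simp

lemma clifford_anticomm_ne: "\<beta> < m \<Longrightarrow> \<gamma> < m \<Longrightarrow> \<beta> \<noteq> \<gamma> \<Longrightarrow> a < n \<Longrightarrow> c < n \<Longrightarrow>
   (\<Sum>b<n. C \<beta> a b * C \<gamma> b c + C \<gamma> a b * C \<beta> b c) = 0"
proof -
  assume b: "\<beta> < m" and g': "\<gamma> < m" and ne: "\<beta> \<noteq> \<gamma>" and a: "a < n" and c: "c < n"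
  have zin: "zb \<beta> + zb \<gamma> \<in> Z" using zb_in_Z b g' subspace_add[OF subspace_Z] by blast
  have gzz: "g (zb \<beta> + zb \<gamma>) (zb \<beta> + zb \<gamma>) = 2"
    using g_zb_zb[OF b b] g_zb_zb[OF b g'] g_zb_zb[OF g' b] g_zb_zb[OF g' g'] ne by simp
  have "(\<Sum>b<n. (C \<beta> a b + C \<gamma> a b) * (C \<beta> b c + C \<gamma> b c)) = -2 * (if a = c then 1 else 0)"
    using pH_structure_constants[OF zin a c] gzz unfolding C_def by simp
  moreover have "(\<Sum>b<n. (C \<beta> a b + C \<gamma> a b) * (C \<beta> b c + C \<gamma> b c)) =
    (\<Sum>b<n. C \<beta> a b * C \<beta> b c) + (\<Sum>b<n. C \<gamma> a b * C \<gamma> b c)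
      + (\<Sum>b<n. C \<beta> a b * C \<gamma> b c + C \<gamma> a b * C \<beta> b c)"
    by (simp add: sum.distrib[symmetric] algebra_simps)
  ultimately show ?thesis using clifford_square[OF b a c] clifford_square[OF g' a c] by simp
qed

lemma clifford_relations: "\<beta> < m \<Longrightarrow> \<gamma> < m \<Longrightarrow> a < n \<Longrightarrow> c < n \<Longrightarrow>
   (\<Sum>b<n. C \<beta> a b * C \<gamma> b c + C \<gamma> a b * C \<beta> b c) = (if \<beta> = \<gamma> \<and> a = c then -2 else 0)"
proof (cases "\<beta> = \<gamma>")
  case True
  assume "\<beta> < m" "\<gamma> < m" "a < n" "c < n"
  have "(\<Sum>b<n. C \<beta> a b * C \<beta> b c + C \<beta> a b * C \<beta> b c) =
      (\<Sum>b<n. C \<beta> a b * C \<beta> b c) + (\<Sum>b<n. C \<beta> a b * C \<beta> b c)" by (rule sum.distrib)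
  then show ?thesis using True clifford_square[of \<beta> a c] \<open>\<beta> < m\<close> \<open>a < n\<close> \<open>c < n\<close> by simp
next
  case False
  assume "\<beta> < m" "\<gamma> < m" "a < n" "c < n"
  then show ?thesis using False clifford_anticomm_ne by simp
qed

lemma C_rows_orthonormal: "\<gamma> < m \<Longrightarrow> a < n \<Longrightarrow> c < n \<Longrightarrow> (\<Sum>b<n. C \<gamma> a b * C \<gamma> c b)
  = (if a = c then 1 else 0)"
proof -
  assume h: "\<gamma> < m" "a < n" "c < n"
  have "(\<Sum>b<n. C \<gamma> a b * C \<gamma> c b) = - (\<Sum>b<n. C \<gamma> a b * C \<gamma> b c)"
    by (simp add: C_antisym[of \<gamma> c] sum_negf)
  then show ?thesis using clifford_square[OF h] by simp
qed

lemma C_row_norm: "\<gamma> < m \<Longrightarrow> a < n \<Longrightarrow> (\<Sum>b<n. C \<gamma> a b * C \<gamma> a b) = 1"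
  using C_rows_orthonormal[of \<gamma> a a] by simp

lemma C_columns_orthonormal: "\<gamma> < m \<Longrightarrow> b < n \<Longrightarrow> d < n \<Longrightarrow> (\<Sum>a<n. C \<gamma> a b * C \<gamma> a d)
  = (if b = d then 1 else 0)"
proof -
  assume h: "\<gamma> < m" "b < n" "d < n"
  have "(\<Sum>a<n. C \<gamma> a b * C \<gamma> a d) = (\<Sum>a<n. C \<gamma> b a * C \<gamma> d a)"
    by (rule sum.cong[OF refl]) (metis C_antisym minus_mult_minus)
  then show ?thesis using C_rows_orthonormal[OF h] by simp
qed

lemma clifford_relations_transposed: "\<beta> < m \<Longrightarrow> \<gamma> < m \<Longrightarrow> a < n \<Longrightarrow> c < n \<Longrightarrow>
   (\<Sum>b<n. C \<beta> a b * C \<gamma> c b + C \<gamma> a b * C \<beta> c b) = (if \<beta> = \<gamma> \<and> a = c then 2 else 0)"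
proof -
  assume h: "\<beta> < m" "\<gamma> < m" "a < n" "c < n"
  have "(\<Sum>b<n. C \<beta> a b * C \<gamma> c b + C \<gamma> a b * C \<beta> c b) =
      - (\<Sum>b<n. C \<beta> a b * C \<gamma> b c + C \<gamma> a b * C \<beta> b c)"
    by (simp add: C_antisym[of \<gamma> c] C_antisym[of \<beta> c] sum_negf[symmetric] algebra_simps)
  then show ?thesis using clifford_relations[OF h] by simp
qed

lemma C_frobenius: "\<beta> < m \<Longrightarrow> \<gamma> < m \<Longrightarrow> (\<Sum>a<n. \<Sum>b<n. C \<beta> a b * C \<gamma> a b) = real n
  * (if \<beta> = \<gamma> then 1 else 0)"
proof -
  assume h: "\<beta> < m" "\<gamma> < m"
  have "(\<Sum>b<n. C \<beta> a b * C \<gamma> a b + C \<gamma> a b * C \<beta> a b) = 2 * (\<Sum>b<n. C \<beta> a b * C \<gamma> a b)" for a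
    by (simp add: sum_distrib_left mult.commute)
  then have "a < n \<Longrightarrow> (\<Sum>b<n. C \<beta> a b * C \<gamma> a b) = (if \<beta> = \<gamma> then 1 else 0)" for a
    using clifford_relations_transposed[OF h, of a a] by auto
  then show ?thesis by simp
qed

end

locale lorentzian_pH_frame = pH_frame +
  assumes lorentz: "lorentzian g"
begin

lemma timelike_eb_exists: "\<exists>a<n. eps a = -1"
proof (rule ccontr)
  assume "\<not> (\<exists>a<n. eps a = -1)"
  then have s1: "\<And>a. a < n \<Longrightarrow> eps a = 1" using eps_cases by blast
  obtain v where v: "g v v < 0" using lorentz by (auto simp: lorentzian_def)
  have "g v v = (\<Sum>\<alpha><m. g v (zb \<alpha>) * g v (zb \<alpha>)) + (\<Sum>a<n. g v (eb a) * g v (eb a))"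
    using g_frame_expansion[of v v] s1 by (simp add: g_sym[of "zb _"] g_sym[of "eb _"])
  also have "\<dots> \<ge> 0" by (intro add_nonneg_nonneg sum_nonneg) auto
  finally show False using v by simp
qed

lemma timelike_eb_unique: "a < n \<Longrightarrow> b < n \<Longrightarrow> eps a = -1 \<Longrightarrow> eps b = -1 \<Longrightarrow> a = b"
proof (rule ccontr)
  assume "a < n" "b < n" "eps a = -1" "eps b = -1" "a \<noteq> b"
  then show False
    using lorentzian_no_orthogonal_timelike_pair[OF lorentz, of "eb a" "eb b"]
    by (simp add: g_eb_eb eps_def[symmetric])
qed

definition t :: nat where "t = (SOME a. a < n \<and> eps a = -1)"

lemma t_less: "t < n" and eps_t: "eps t = -1"
proof -
  have "\<exists>a. a < n \<and> eps a = -1" using timelike_eb_exists by blast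
  then have "t < n \<and> eps t = -1" unfolding t_def by (rule someI_ex)
  then show "t < n" "eps t = -1" by auto
qed

lemma eps_eq: "c < n \<Longrightarrow> eps c = (if c = t then -1 else 1)"
proof (cases "c = t")
  case False
  assume c: "c < n"
  then have "eps c \<noteq> -1" using timelike_eb_unique[OF c t_less _ eps_t] False by blast
  then show ?thesis using eps_cases[OF c] False by simp
qed (simp add: eps_t)

lemma sum_eps_mult: "(\<Sum>c<n. eps c * f c) = (\<Sum>c<n. f c) - 2 * f t"
proof -
  have "(\<Sum>c<n. eps c * f c) = (\<Sum>c<n. f c - (if c = t then 2 * f c else 0))"
    by (rule sum.cong) (auto simp: eps_eq)
  also have "\<dots> = (\<Sum>c<n. f c) - 2 * f t" using t_less by (simp add: sum_subtractf)
  finally show ?thesis .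
qed

lemma sum_eps: "(\<Sum>c<n. eps c) = real n - 2"
  using sum_eps_mult[of "\<lambda>c. 1"] by simp

definition P :: "nat \<Rightarrow> nat \<Rightarrow> real" where "P a d = (\<Sum>\<gamma><m. C \<gamma> t a * C \<gamma> t d)"

lemma P_t[simp]: "P a t = 0" "P t d = 0" by (simp_all add: P_def)

lemma P_sym: "P a d = P d a" by (simp add: P_def mult.commute)

lemma eps_P: "d < n \<Longrightarrow> eps d * P a d = P a d" using eps_eq by auto

lemma C_t_rows_orthonormal: "\<beta> < m \<Longrightarrow> \<gamma> < m \<Longrightarrow> (\<Sum>b<n. C \<beta> t b * C \<gamma> t b) = (if \<beta> = \<gamma> then 1 else 0)"
proof -
  assume h: "\<beta> < m" "\<gamma> < m"
  have "(\<Sum>b<n. C \<beta> t b * C \<gamma> t b + C \<gamma> t b * C \<beta> t b) = 2 * (\<Sum>b<n. C \<beta> t b * C \<gamma> t b)"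
    by (simp add: sum_distrib_left mult.commute)
  then show ?thesis using clifford_relations_transposed[OF h t_less t_less] by auto
qed

lemma trace_P: "(\<Sum>a<n. P a a) = real m"
proof -
  have "(\<Sum>a<n. P a a) = (\<Sum>\<gamma><m. \<Sum>a<n. C \<gamma> t a * C \<gamma> t a)"
    unfolding P_def by (rule sum.swap)
  also have "\<dots> = (\<Sum>\<gamma><m. 1)" by (rule sum.cong) (auto simp: C_t_rows_orthonormal)
  finally show ?thesis by simp
qed

lemma P_idempotent: "b < n \<Longrightarrow> e < n \<Longrightarrow> (\<Sum>d<n. P b d * P d e) = P b e"
proof -
  have "(\<Sum>d<n. P b d * P d e) = (\<Sum>d<n. \<Sum>\<beta><m. \<Sum>\<gamma><m. C \<beta> t b * C \<gamma> t e * (C \<beta> t d * C \<gamma> t d))"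
    unfolding P_def sum_product
      by (rule sum.cong[OF refl], rule sum.cong[OF refl], rule sum.cong[OF refl])
      (simp add: mult_ac)
  also have "\<dots> = (\<Sum>\<beta><m. \<Sum>\<gamma><m. \<Sum>d<n. C \<beta> t b * C \<gamma> t e * (C \<beta> t d * C \<gamma> t d))"
    by (rule sum_swap3)
  also have "\<dots> = (\<Sum>\<beta><m. \<Sum>\<gamma><m. C \<beta> t b * C \<gamma> t e * (\<Sum>d<n. C \<beta> t d * C \<gamma> t d))"
    by (simp add: sum_distrib_left)
  also have "\<dots> = (\<Sum>\<beta><m. \<Sum>\<gamma><m. if \<beta> = \<gamma> then C \<beta> t b * C \<gamma> t e else 0)"
    by (rule sum.cong[OF refl], rule sum.cong[OF refl]) (simp add: C_t_rows_orthonormal)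
  also have "\<dots> = P b e" by (simp add: P_def)
  finally show ?thesis .
qed

lemma P_frobenius: "(\<Sum>b<n. \<Sum>d<n. P b d * P b d) = real m"
proof -
  have "(\<Sum>b<n. \<Sum>d<n. P b d * P b d) = (\<Sum>b<n. P b b)"
  proof (rule sum.cong[OF refl])
    fix b assume "b \<in> {..<n}"
    then have b: "b < n" by simp
    have "(\<Sum>d<n. P b d * P b d) = (\<Sum>d<n. P b d * P d b)"
      by (rule sum.cong[OF refl]) (simp only: P_sym[of d b for d])
    then show "(\<Sum>d<n. P b d * P b d) = P b b" using P_idempotent[OF b b] by simp
  qed
  then show ?thesis using trace_P by simp
qed

lemma P_diag_le_1: "b < n \<Longrightarrow> P b b \<le> 1"
proof -
  assume b: "b < n"
  have "0 \<le> (\<Sum>d<n. ((if b = d then 1 else 0) - P b d) * ((if b = d then 1 else 0) - P b d))"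
    by (rule sum_nonneg) simp
  also have "\<dots> = (\<Sum>d<n. (if b = d then 1 - 2 * P b d else 0) + P b d * P d b)"
    by (rule sum.cong[OF refl]) (auto simp: algebra_simps P_sym[of _ b])
  also have "\<dots> = 1 - 2 * P b b + P b b" using b by (simp add: sum.distrib P_idempotent)
  finally show ?thesis by simp
qed

lemma dim_center_less: "m + 1 \<le> n"
proof -
  have "real m = (\<Sum>b<n. P b b)" using trace_P by simp
  also have "\<dots> \<le> (\<Sum>b<n. if b = t then 0 else 1)"
    by (rule sum_mono) (auto simp: P_diag_le_1)
  also have "\<dots> = (\<Sum>b<n. 1 - (if b = t then 1 else 0))" by (rule sum.cong) auto
  also have "\<dots> = real n - 1" using t_less by (simp add: sum_subtractf)
  finally show ?thesis by simp
qed

lemma ricci_tensor_zb_zb_value: "\<beta> < m \<Longrightarrow> \<gamma> < m \<Longrightarrow> rho (zb \<beta>) (zb \<gamma>) = (real n - 4) / 4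
  * (if \<beta> = \<gamma> then 1 else 0)"
proof -
  assume h: "\<beta> < m" "\<gamma> < m"
  have inner: "(\<Sum>c<n. eps c * C \<beta> a c * C \<gamma> a c) = (\<Sum>c<n. C \<beta> a c * C \<gamma> a c) - 2
    * (C \<beta> t a * C \<gamma> t a)" for a
    using sum_eps_mult[of "\<lambda>c. C \<beta> a c * C \<gamma> a c"] by (simp add: mult.assoc C_antisym[of _ a t])
  have "(\<Sum>a<n. eps a * (\<Sum>c<n. eps c * C \<beta> a c * C \<gamma> a c)) =
     (\<Sum>a<n. eps a * ((\<Sum>c<n. C \<beta> a c * C \<gamma> a c) - 2 * (C \<beta> t a * C \<gamma> t a)))"
    by (simp add: inner)
  also have "\<dots> = (\<Sum>a<n. (\<Sum>c<n. C \<beta> a c * C \<gamma> a c) - 2 * (C \<beta> t a * C \<gamma> t a))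
     - 2 * ((\<Sum>c<n. C \<beta> t c * C \<gamma> t c) - 2 * (C \<beta> t t * C \<gamma> t t))"
    by (rule sum_eps_mult)
  also have "\<dots> = real n * (if \<beta> = \<gamma> then 1 else 0) - 4 * (if \<beta> = \<gamma> then 1 else 0)"
    using C_frobenius[OF h] C_t_rows_orthonormal[OF h]
      by (simp add: sum_subtractf sum_distrib_left[symmetric])
  finally show ?thesis using ricci_tensor_zb_zb[OF h] by (simp add: algebra_simps)
qed

lemma ricci_op_zb_value: "\<gamma> < m \<Longrightarrow> Ric (zb \<gamma>) = ((real n - 4) / 4) *\<^sub>R zb \<gamma>"
proof -
  assume h: "\<gamma> < m"
  have "(\<Sum>\<alpha><m. rho (zb \<gamma>) (zb \<alpha>) *\<^sub>R zb \<alpha>)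
    = (\<Sum>\<alpha><m. if \<gamma> = \<alpha> then ((real n - 4) / 4) *\<^sub>R zb \<gamma> else 0)"
    by (rule sum.cong) (auto simp: ricci_tensor_zb_zb_value h)
  then show ?thesis using h by (simp add: ricci_op_zb)
qed

lemma ricci_tensor_eb_eb_P: "a < n \<Longrightarrow> b < n \<Longrightarrow> rho (eb a) (eb b) = -(1/2)
  * (real m * (if a = b then 1 else 0)) + P a b"
proof -
  assume h: "a < n" "b < n"
  have inner: "(\<Sum>c<n. eps c * C \<gamma> a c * C \<gamma> b c) = (if a = b then 1 else 0) - 2
    * (C \<gamma> t a * C \<gamma> t b)"
    if g': "\<gamma> < m" for \<gamma>
    using sum_eps_mult[of "\<lambda>c. C \<gamma> a c * C \<gamma> b c"] C_rows_orthonormal[OF g' h]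
    by (simp add: mult.assoc C_antisym[of _ a t] C_antisym[of _ b t])
  have "(\<Sum>\<gamma><m. \<Sum>c<n. eps c * C \<gamma> a c * C \<gamma> b c)
    = (\<Sum>\<gamma><m. (if a = b then 1 else 0) - 2 * (C \<gamma> t a * C \<gamma> t b))"
    by (rule sum.cong) (auto simp: inner)
  also have "\<dots> = real m * (if a = b then 1 else 0) - 2 * P a b"
    by (simp add: sum_subtractf P_def sum_distrib_left)
  finally have X: "(\<Sum>\<gamma><m. \<Sum>c<n. eps c * C \<gamma> a c * C \<gamma> b c) = real m * (if a = b then 1 else 0)
    - 2 * P a b" .
  show ?thesis using ricci_tensor_eb_eb[OF h] X by (simp add: field_simps)
qed

lemma g_zb_ricci_op_br: "\<gamma> < m \<Longrightarrow> g (zb \<gamma>) (Ric (br (eb a) (eb b))) = (real n - 4) / 4 * C \<gamma> a b"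
proof -
  assume h: "\<gamma> < m"
  have "Ric (br (eb a) (eb b)) = (\<Sum>\<beta><m. C \<beta> a b *\<^sub>R Ric (zb \<beta>))"
    by (simp add: br_eb_eb linear_sum[OF linear_ricci_op] linear_scale[OF linear_ricci_op])
  also have "\<dots> = (\<Sum>\<beta><m. (C \<beta> a b * ((real n - 4) / 4)) *\<^sub>R zb \<beta>)"
    by (rule sum.cong) (auto simp: ricci_op_zb_value)
  finally show ?thesis using sum_g_zb[OF h, of "\<lambda>\<beta>. C \<beta> a b * ((real n - 4) / 4)"] h
    by (simp add: g_sym[of "zb \<gamma>"] mult.commute)
qed

lemma sum_ricci_tensor_C_left: "a < n \<Longrightarrow> (\<Sum>d<n. eps d * rho (eb a) (eb d) * C \<gamma> d b) = -(real m / 2)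
  * eps a * C \<gamma> a b + (\<Sum>d<n. P a d * C \<gamma> d b)"
proof -
  assume a: "a < n"
  have "(\<Sum>d<n. eps d * rho (eb a) (eb d) * C \<gamma> d b) =
      (\<Sum>d<n. (if a = d then -(real m / 2) * eps a * C \<gamma> a b else 0) + P a d * C \<gamma> d b)"
    by (rule sum.cong[OF refl]) (auto simp: ricci_tensor_eb_eb_P a eps_P algebra_simps)
  then show ?thesis using a by (simp add: sum.distrib)
qed

lemma sum_ricci_tensor_C_right: "b < n \<Longrightarrow> (\<Sum>d<n. eps d * rho (eb b) (eb d) * C \<gamma> a d) = -(real m / 2)
  * eps b * C \<gamma> a b + (\<Sum>d<n. P b d * C \<gamma> a d)"
proof -
  assume b: "b < n"
  have "(\<Sum>d<n. eps d * rho (eb b) (eb d) * C \<gamma> a d) =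
      (\<Sum>d<n. (if b = d then -(real m / 2) * eps b * C \<gamma> a b else 0) + P b d * C \<gamma> a d)"
    by (rule sum.cong[OF refl]) (auto simp: ricci_tensor_eb_eb_P b eps_P algebra_simps)
  then show ?thesis using b by (simp add: sum.distrib)
qed

text \<open>The z_\<gamma>-component of D[e_a, e_b] = [D e_a, e_b] + [e_a, D e_b] for D = Ric - c Id,
with K = (n-4)/4 + c.\<close>

definition soliton_eq :: "real \<Rightarrow> bool" where
  "soliton_eq K \<longleftrightarrow> (\<forall>\<gamma><m. \<forall>a<n. \<forall>b<n. K * C \<gamma> a b =
     -(real m / 2) * (eps a + eps b) * C \<gamma> a b + (\<Sum>d<n. P a d * C \<gamma> d b) + (\<Sum>d<n. P b d * C \<gamma> a d))"

lemma soliton_eq_of_derivation: "derivation br D \<Longrightarrow> (\<forall>x. Ric x = c *\<^sub>R x + D x)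
  \<Longrightarrow> soliton_eq ((real n - 4) / 4 + c)"
proof -
  assume der: "derivation br D" and RD: "\<forall>x. Ric x = c *\<^sub>R x + D x"
  have Dx: "D x = Ric x - c *\<^sub>R x" for x using RD by (metis add_diff_cancel_left')
  show ?thesis unfolding soliton_eq_def
  proof (intro allI impI)
    fix \<gamma> a b assume g': "\<gamma> < m" and a: "a < n" and b: "b < n"
    have "D (br (eb a) (eb b)) = br (D (eb a)) (eb b) + br (eb a) (D (eb b))"
      using der by (simp add: derivation_def)
    then have "g (zb \<gamma>) (D (br (eb a) (eb b))) = g (zb \<gamma>) (br (D (eb a)) (eb b))
      + g (zb \<gamma>) (br (eb a) (D (eb b)))"
      by simp
    then have "(real n - 4) / 4 * C \<gamma> a b - c * C \<gamma> a b =
        (\<Sum>d<n. eps d * rho (eb a) (eb d) * C \<gamma> d b) - c * C \<gamma> a b +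
        ((\<Sum>d<n. eps d * rho (eb b) (eb d) * C \<gamma> a d) - c * C \<gamma> a b)"
      by (simp add: Dx g_zb_ricci_op_br[OF g'] g_zb_br_ricci_op_left[OF a]
        g_zb_br_ricci_op_right[OF b] C_def)
    from this[unfolded sum_ricci_tensor_C_left[OF a] sum_ricci_tensor_C_right[OF b]]
    show "((real n - 4) / 4 + c) * C \<gamma> a b =
     -(real m / 2) * (eps a + eps b) * C \<gamma> a b + (\<Sum>d<n. P a d * C \<gamma> d b) + (\<Sum>d<n. P b d * C \<gamma> a d)"
      by (simp only: distrib_right distrib_left left_diff_distrib right_diff_distrib)
  qed
qed

lemma soliton_eqD: "soliton_eq K \<Longrightarrow> \<gamma> < m \<Longrightarrow> a < n \<Longrightarrow> b < n \<Longrightarrow> K * C \<gamma> a b =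
     -(real m / 2) * (eps a + eps b) * C \<gamma> a b + (\<Sum>d<n. P a d * C \<gamma> d b) + (\<Sum>d<n. P b d * C \<gamma> a d)"
  unfolding soliton_eq_def by blast

lemma soliton_eq_constant: "soliton_eq K \<Longrightarrow> K = 1"
proof -
  assume dq: "soliton_eq K"
  have E1: "K * C \<gamma> t b = (\<Sum>d<n. P b d * C \<gamma> t d)" if g': "\<gamma> < m" and b: "b < n" for \<gamma> b
  proof -
    have "(eps t + eps b) * C \<gamma> t b = 0"
      using b eps_eq[OF t_less] eps_eq[OF b] by (cases "b = t") auto
    then show ?thesis using soliton_eqD[OF dq g' t_less b] by simp
  qed
  have "(\<Sum>\<gamma><m. \<Sum>b<n. C \<gamma> t b * (K * C \<gamma> t b)) = (\<Sum>\<gamma><m. K * (\<Sum>b<n. C \<gamma> t b * C \<gamma> t b))"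
    by (simp add: sum_distrib_left mult_ac)
  also have "\<dots> = (\<Sum>\<gamma><m. K)" by (rule sum.cong) (auto simp: C_t_rows_orthonormal)
  finally have L: "(\<Sum>\<gamma><m. \<Sum>b<n. C \<gamma> t b * (K * C \<gamma> t b)) = K * real m" by simp
  have "(\<Sum>\<gamma><m. \<Sum>b<n. C \<gamma> t b * (K * C \<gamma> t b)) =
        (\<Sum>\<gamma><m. \<Sum>b<n. \<Sum>d<n. P b d * (C \<gamma> t b * C \<gamma> t d))"
    by (rule sum.cong[OF refl], rule sum.cong[OF refl]) (simp add: E1 sum_distrib_left mult_ac)
  also have "\<dots> = (\<Sum>b<n. \<Sum>d<n. \<Sum>\<gamma><m. P b d * (C \<gamma> t b * C \<gamma> t d))" by (rule sum_swap3)
  also have "\<dots> = (\<Sum>b<n. \<Sum>d<n. P b d * P b d)"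
  proof (rule sum.cong[OF refl], rule sum.cong[OF refl])
    fix b d
    have "(\<Sum>\<gamma><m. P b d * (C \<gamma> t b * C \<gamma> t d)) = P b d * (\<Sum>\<gamma><m. C \<gamma> t b * C \<gamma> t d)"
      by (rule sum_distrib_left[symmetric])
    also have "(\<Sum>\<gamma><m. C \<gamma> t b * C \<gamma> t d) = P b d" by (simp add: P_def)
    finally show "(\<Sum>\<gamma><m. P b d * (C \<gamma> t b * C \<gamma> t d)) = P b d * P b d" .
  qed
  also have "\<dots> = real m" by (rule P_frobenius)
  finally have "K * real m = real m" using L by simp
  then show "K = 1" using dim_center_pos by simp
qed

lemma contract_constant: "(\<Sum>\<gamma><m. \<Sum>a<n. \<Sum>b<n. C \<gamma> a b * (K * C \<gamma> a b)) = K * real m * real n"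
proof -
  have "(\<Sum>\<gamma><m. \<Sum>a<n. \<Sum>b<n. C \<gamma> a b * (K * C \<gamma> a b)) = (\<Sum>\<gamma><m. K * (\<Sum>a<n. \<Sum>b<n. C \<gamma> a b * C \<gamma> a b))"
    by (simp add: sum_distrib_left mult_ac)
  also have "\<dots> = (\<Sum>\<gamma><m. K * real n)" by (rule sum.cong) (auto simp: C_frobenius)
  finally show ?thesis by simp
qed

lemma contract_eps_row: "(\<Sum>\<gamma><m. \<Sum>a<n. \<Sum>b<n. eps a * (C \<gamma> a b * C \<gamma> a b)) = real m * (real n - 2)"
proof -
  have "(\<Sum>\<gamma><m. \<Sum>a<n. \<Sum>b<n. eps a * (C \<gamma> a b * C \<gamma> a b))
    = (\<Sum>\<gamma><m. \<Sum>a<n. eps a * (\<Sum>b<n. C \<gamma> a b * C \<gamma> a b))"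
    by (simp add: sum_distrib_left)
  also have "\<dots> = (\<Sum>\<gamma><m. \<Sum>a<n. eps a)"
    by (rule sum.cong[OF refl], rule sum.cong[OF refl]) (simp add: C_row_norm)
  finally show ?thesis by (simp add: sum_eps)
qed

lemma contract_eps_column: "(\<Sum>\<gamma><m. \<Sum>a<n. \<Sum>b<n. eps b * (C \<gamma> a b * C \<gamma> a b)) = real m * (real n - 2)"
proof -
  have "(\<Sum>\<gamma><m. \<Sum>a<n. \<Sum>b<n. eps b * (C \<gamma> a b * C \<gamma> a b))
    = (\<Sum>\<gamma><m. \<Sum>b<n. \<Sum>a<n. eps b * (C \<gamma> a b * C \<gamma> a b))"
    by (rule sum.cong[OF refl]) (rule sum.swap)
  also have "\<dots> = (\<Sum>\<gamma><m. \<Sum>b<n. eps b * (\<Sum>a<n. C \<gamma> a b * C \<gamma> a b))"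
    by (simp add: sum_distrib_left)
  also have "\<dots> = (\<Sum>\<gamma><m. \<Sum>b<n. eps b)"
    by (rule sum.cong[OF refl], rule sum.cong[OF refl]) (simp add: C_columns_orthonormal)
  finally show ?thesis by (simp add: sum_eps)
qed

lemma contract_P_left: "(\<Sum>\<gamma><m. \<Sum>a<n. \<Sum>b<n. C \<gamma> a b * (\<Sum>d<n. P a d * C \<gamma> d b)) = real m * real m"
proof -
  have inner: "(\<Sum>b<n. C \<gamma> a b * (\<Sum>d<n. P a d * C \<gamma> d b))
    = P a a" if g': "\<gamma> < m" and a: "a < n" for \<gamma> a
  proof -
    have "(\<Sum>b<n. C \<gamma> a b * (\<Sum>d<n. P a d * C \<gamma> d b)) = (\<Sum>b<n. \<Sum>d<n. P a d * (C \<gamma> a b * C \<gamma> d b))"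
      by (simp add: sum_distrib_left mult_ac)
    also have "\<dots> = (\<Sum>d<n. \<Sum>b<n. P a d * (C \<gamma> a b * C \<gamma> d b))" by (rule sum.swap)
    also have "\<dots> = (\<Sum>d<n. P a d * (\<Sum>b<n. C \<gamma> a b * C \<gamma> d b))" by (simp add: sum_distrib_left)
    also have "\<dots> = (\<Sum>d<n. if a = d then P a d else 0)"
      by (rule sum.cong[OF refl]) (simp add: C_rows_orthonormal[OF g' a])
    finally show ?thesis using a by simp
  qed
  have "(\<Sum>\<gamma><m. \<Sum>a<n. \<Sum>b<n. C \<gamma> a b * (\<Sum>d<n. P a d * C \<gamma> d b)) = (\<Sum>\<gamma><m. \<Sum>a<n. P a a)"
    by (rule sum.cong[OF refl], rule sum.cong[OF refl]) (simp add: inner)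
  then show ?thesis by (simp add: trace_P)
qed

lemma contract_P_right: "(\<Sum>\<gamma><m. \<Sum>a<n. \<Sum>b<n. C \<gamma> a b * (\<Sum>d<n. P b d * C \<gamma> a d)) = real m * real m"
proof -
  have inner: "(\<Sum>a<n. \<Sum>b<n. C \<gamma> a b * (\<Sum>d<n. P b d * C \<gamma> a d)) = (\<Sum>b<n. P b b)" if g': "\<gamma> < m" for \<gamma>
  proof -
    have "(\<Sum>a<n. \<Sum>b<n. C \<gamma> a b * (\<Sum>d<n. P b d * C \<gamma> a d))
      = (\<Sum>a<n. \<Sum>b<n. \<Sum>d<n. P b d * (C \<gamma> a b * C \<gamma> a d))"
      by (simp add: sum_distrib_left mult_ac)
    also have "\<dots> = (\<Sum>b<n. \<Sum>d<n. \<Sum>a<n. P b d * (C \<gamma> a b * C \<gamma> a d))" by (rule sum_swap3)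
    also have "\<dots> = (\<Sum>b<n. \<Sum>d<n. P b d * (\<Sum>a<n. C \<gamma> a b * C \<gamma> a d))" by (simp add: sum_distrib_left)
    also have "\<dots> = (\<Sum>b<n. \<Sum>d<n. if b = d then P b d else 0)"
      by (rule sum.cong[OF refl], rule sum.cong[OF refl]) (simp add: C_columns_orthonormal[OF g'])
    finally show ?thesis by simp
  qed
  have "(\<Sum>\<gamma><m. \<Sum>a<n. \<Sum>b<n. C \<gamma> a b * (\<Sum>d<n. P b d * C \<gamma> a d)) = (\<Sum>\<gamma><m. \<Sum>b<n. P b b)"
    by (rule sum.cong[OF refl]) (simp add: inner)
  then show ?thesis by (simp add: trace_P)
qed

lemma soliton_eq_contracted: "soliton_eq K \<Longrightarrow> K * real m * real n = - real m * real m * (real n - 2)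
  + 2 * real m * real m"
proof -
  assume dq: "soliton_eq K"
  have pt: "C \<gamma> a b * (K * C \<gamma> a b) =
     -(real m / 2) * (eps a * (C \<gamma> a b * C \<gamma> a b)) + -(real m / 2) * (eps b * (C \<gamma> a b * C \<gamma> a b))
      + C \<gamma> a b * (\<Sum>d<n. P a d * C \<gamma> d b) + C \<gamma> a b * (\<Sum>d<n. P b d * C \<gamma> a d)"
    if "\<gamma> < m" "a < n" "b < n" for \<gamma> a b
  proof -
    have "C \<gamma> a b * (K * C \<gamma> a b) = C \<gamma> a b
      * (-(real m / 2) * (eps a + eps b) * C \<gamma> a b + (\<Sum>d<n. P a d * C \<gamma> d b)
      + (\<Sum>d<n. P b d * C \<gamma> a d))"
      using soliton_eqD[OF dq that] by simp
    then show ?thesis by (simp add: algebra_simps)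
  qed
  have "K * real m * real n = (\<Sum>\<gamma><m. \<Sum>a<n. \<Sum>b<n. C \<gamma> a b * (K * C \<gamma> a b))"
    by (simp add: contract_constant)
  also have "\<dots> = (\<Sum>\<gamma><m. \<Sum>a<n. \<Sum>b<n.
     -(real m / 2) * (eps a * (C \<gamma> a b * C \<gamma> a b)) + -(real m / 2) * (eps b * (C \<gamma> a b * C \<gamma> a b))
      + C \<gamma> a b * (\<Sum>d<n. P a d * C \<gamma> d b) + C \<gamma> a b * (\<Sum>d<n. P b d * C \<gamma> a d))"
    by (rule sum.cong[OF refl], rule sum.cong[OF refl], rule sum.cong[OF refl]) (simp add: pt)
  also have "\<dots> = -(real m / 2) * (\<Sum>\<gamma><m. \<Sum>a<n. \<Sum>b<n. eps a * (C \<gamma> a b * C \<gamma> a b))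
     + -(real m / 2) * (\<Sum>\<gamma><m. \<Sum>a<n. \<Sum>b<n. eps b * (C \<gamma> a b * C \<gamma> a b))
     + (\<Sum>\<gamma><m. \<Sum>a<n. \<Sum>b<n. C \<gamma> a b * (\<Sum>d<n. P a d * C \<gamma> d b))
     + (\<Sum>\<gamma><m. \<Sum>a<n. \<Sum>b<n. C \<gamma> a b * (\<Sum>d<n. P b d * C \<gamma> a d))"
    by (simp only: sum.distrib sum_distrib_left)
  also have "\<dots> = - real m * real m * (real n - 2) + 2 * real m * real m"
    by (simp only: contract_eps_row contract_eps_column contract_P_left contract_P_right)
  finally show ?thesis .
qed

lemma soliton_eq_dims: "soliton_eq K \<Longrightarrow> m = 1 \<and> n = 2"
proof -
  assume dq: "soliton_eq K"
  have "real m * real n = - real m * real m * (real n - 2) + 2 * real m * real m"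
    using soliton_eq_contracted[OF dq] soliton_eq_constant[OF dq] by simp
  then have "real m * (real n + real m * real n - 4 * real m) = 0" by (simp add: algebra_simps)
  then have "real n + real m * real n = 4 * real m" using dim_center_pos by simp
  then have "n + m * n = 4 * m" by (metis of_nat_add of_nat_mult of_nat_eq_iff of_nat_numeral)
  then show ?thesis using nat_dims_heisenberg dim_center_pos dim_center_less by blast
qed

lemma soliton_eq_heisenberg: "m = 1 \<Longrightarrow> n = 2 \<Longrightarrow> soliton_eq 1"
proof -
  assume m1: "m = 1" and n2: "n = 2"
  have c10: "C 0 (Suc 0) 0 = - C 0 0 (Suc 0)" by (rule C_antisym)
  have sum_n: "(\<Sum>d<n. f d) = f 0 + f 1" for f :: "nat \<Rightarrow> real"
    using n2 by (simp add: numeral_2_eq_2)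
  have x2: "C 0 0 (Suc 0) * C 0 0 (Suc 0) = 1"
    using C_row_norm[of 0 0, unfolded sum_n] m1 n2 by simp
  have x3: "C 0 0 (Suc 0) * (C 0 0 (Suc 0) * C 0 0 (Suc 0)) = C 0 0 (Suc 0)" using x2 by simp
  have Pd: "P a d = C 0 t a * C 0 t d" for a d unfolding P_def using m1 by simp
  have "t < 2" using order.strict_trans2[OF t_less eq_imp_le[OF n2]] .
  then have t01: "t = 0 \<or> t = 1" by arith
  have "0 < n" "Suc 0 < n" using n2 by simp_all
  then have s01: "eps 0 = (if t = 0 then -1 else 1)" "eps (Suc 0) = (if t = Suc 0 then -1 else 1)"
    using eps_eq by simp_all
  show ?thesis unfolding soliton_eq_def
  proof (intro allI impI)
    fix \<gamma> a b assume "\<gamma> < m" "a < n" "b < n"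
    then have g0: "\<gamma> = 0" and a: "a = 0 \<or> a = 1" and b: "b = 0 \<or> b = 1" using m1 n2 by auto
    show "1 * C \<gamma> a b = -(real m / 2) * (eps a + eps b) * C \<gamma> a b + (\<Sum>d<n. P a d * C \<gamma> d b)
      + (\<Sum>d<n. P b d * C \<gamma> a d)"
      using t01 a b unfolding Pd unfolding g0 m1 sum_n
      by (elim disjE) (simp_all add: c10 s01 x2 x3 mult.assoc)
  qed
qed

lemma derivation_ricci_heisenberg:
  assumes m1: "m = 1" and n2: "n = 2"
  shows "derivation br (\<lambda>x. Ric x - (3/2) *\<^sub>R x)"
proof (rule derivation_on_frame)
  show "linear (\<lambda>x. Ric x - (3/2) *\<^sub>R x)"
    by (rule linearI) (simp_all add: ricci_op_simps algebra_simps)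
  show "Ric z - (3/2) *\<^sub>R z \<in> Z" if "z \<in> Z" for z
    using that ricci_op_in_Z scaleR_in_Z subspace_diff[OF subspace_Z] by simp
  fix a b assume a: "a < n" and b: "b < n"
  show "Ric (br (eb a) (eb b)) - (3/2) *\<^sub>R br (eb a) (eb b) =
    br (Ric (eb a) - (3/2) *\<^sub>R eb a) (eb b) + br (eb a) (Ric (eb b) - (3/2) *\<^sub>R eb b)"
  proof (rule Z_eqI)
    show "Ric (br (eb a) (eb b)) - (3/2) *\<^sub>R br (eb a) (eb b) \<in> Z"
      using ricci_op_in_Z[OF br_in_Z] br_in_Z scaleR_in_Z subspace_diff[OF subspace_Z] by simp
    show "br (Ric (eb a) - (3/2) *\<^sub>R eb a) (eb b) + br (eb a) (Ric (eb b) - (3/2) *\<^sub>R eb b) \<in> Z"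
      using br_in_Z subspace_add[OF subspace_Z] by blast
    fix \<gamma> assume \<gamma>: "\<gamma> < m"
    have "g (zb \<gamma>) (Ric (br (eb a) (eb b)) - (3/2) *\<^sub>R br (eb a) (eb b)) =
      ((real n - 4) / 4 - 3/2) * C \<gamma> a b"
      by (simp add: g_zb_ricci_op_br[OF \<gamma>] C_def algebra_simps)
    also have "\<dots> = C \<gamma> a b - 3 * C \<gamma> a b" using n2 by simp
    also have "\<dots> = g (zb \<gamma>) (br (Ric (eb a) - (3/2) *\<^sub>R eb a) (eb b)
      + br (eb a) (Ric (eb b) - (3/2) *\<^sub>R eb b))"
    proof -
      have "g (zb \<gamma>) (br (Ric (eb a) - (3/2) *\<^sub>R eb a) (eb b)
        + br (eb a) (Ric (eb b) - (3/2) *\<^sub>R eb b))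
        = (\<Sum>d<n. eps d * rho (eb a) (eb d) * C \<gamma> d b) + (\<Sum>d<n. eps d * rho (eb b) (eb d) * C \<gamma> a d)
          - 3 * C \<gamma> a b"
        by (simp add: g_zb_br_ricci_op_left[OF a] g_zb_br_ricci_op_right[OF b] C_def)
      then show ?thesis
        using soliton_eqD[OF soliton_eq_heisenberg[OF m1 n2] \<gamma> a b]
        unfolding sum_ricci_tensor_C_left[OF a] sum_ricci_tensor_C_right[OF b]
        by (simp add: algebra_simps)
    qed
    finally show "g (zb \<gamma>) (Ric (br (eb a) (eb b)) - (3/2) *\<^sub>R br (eb a) (eb b)) =
      g (zb \<gamma>) (br (Ric (eb a) - (3/2) *\<^sub>R eb a) (eb b)
        + br (eb a) (Ric (eb b) - (3/2) *\<^sub>R eb b))" .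
  qed
qed

lemma nilsoliton_iff: "nilsoliton br g \<longleftrightarrow> m = 1 \<and> n = 2"
proof
  assume "nilsoliton br g"
  then obtain c D where "derivation br D" "\<forall>x. Ric x = c *\<^sub>R x + D x"
    unfolding nilsoliton_def by blast
  then show "m = 1 \<and> n = 2" by (rule soliton_eq_dims[OF soliton_eq_of_derivation])
next
  assume "m = 1 \<and> n = 2"
  then have "derivation br (\<lambda>x. Ric x - (3/2) *\<^sub>R x)"
    by (elim conjE) (rule derivation_ricci_heisenberg)
  then show "nilsoliton br g"
    unfolding nilsoliton_def by (intro exI[of _ "3/2"] exI[of _ "\<lambda>x. Ric x - (3/2) *\<^sub>R x"]) simp
qed

end

theorem mainTheorem3:
  fixes br :: "'v::euclidean_space \<Rightarrow> 'v \<Rightarrow> 'v"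
    and g :: "'v \<Rightarrow> 'v \<Rightarrow> real"
    and zb eb :: "nat \<Rightarrow> 'v" and m n :: nat
  assumes "two_step_nilpotent br"
    and "lorentzian g"
    and "\<forall>z\<in>lie_center br. z \<noteq> 0 \<longrightarrow> g z z > 0"
    and "orthonormal_basis g zb m (lie_center br)"
    and "orthonormal_basis g eb n (orth_compl g (lie_center br))"
    and "pH_type br g zb m eb n"
  shows "nilsoliton br g \<longleftrightarrow> m = 1 \<and> n = 2"
proof -
  interpret lorentzian_pH_frame br g zb eb m n
    by unfold_locales (use assms in \<open>auto simp: lorentzian_def\<close>)
  show ?thesis by (rule nilsoliton_iff)
qed

end
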